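(* Let $Q:\mathbb{R}_{\ge0}\to\overline{\mathcal Q}_n$ be Riemann-integrable and sufficiently exciting. Then for every connected continuous-time interconnection $\Gamma=[\gamma_{ij}]\in\mathbb{R}^{p\times p}$, the solutions $x_i(\cdot)$ of $\dot x_i=Q_t\sum_{j\ne i}\gamma_{ij}(x_j-x_i)$, $i=1,\dots,p$, synchronize to the constant $\bar x(t)\equiv(r^T\otimes I_n)\mathbf x(0)$, where $\mathbf x=[x_1^T\cdots x_p^T]^T$ and $r\in\mathbb{R}^p$ satisfies $r^T\Gamma=0$, $r^T\mathbf 1=1$.
   Context: $|\cdot|$ induced 2-norm; $\mathbf 1$ all-ones vector; $\otimes$ Kronecker product; $\sigma_{\min}$ smallest singular value; $\mathcal Q_n$ symmetric positive semidefinite $n\times n$ matrices; $\overline{\mathcal Q}_n=\{R\in\mathcal Q_n:|R|\le1\}$. Let $\delta(\varepsilon,T):=\min\{\varepsilon/2,\varepsilon^3/(240T^5)\}$. $Q:\mathbb{R}_{\ge0}\to\mathcal Q_n$ is sufficiently exciting if there is a sequence $(\varepsilon_i,T_i)_{i\ge1}$ of pairs of positive reals with $\sigma_{\min}\big(\int_{t_i}^{t_i+T_i}Q_t\,dt\big)\ge\varepsilon_i$, where $t_1=0$, $t_i=\sum_{j<i}T_j$, and $\sum_{i=1}^\infty\delta(\varepsilon_i,T_i)=\infty$. Continuous-time interconnection: $\gamma_{ij}\ge0$ ($i\ne j$), $\gamma_{ii}=-\sum_{j\ne i}\gamma_{ij}$; graph edge $(n_i,n_j)$ iff $\gamma_{ij}>0$;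 connected if some node is reachable by a directed path from every other node. Synchronize to $\bar x$: $|x_i(t)-\bar x(t)|\to0$ as $t\to\infty$ for all $i$. *)

theory Defs
  imports "HOL-Analysis.Analysis"
begin

text \<open>Riemann integrability on a compact interval [a,b]: Riemann sums over tagged
  divisions of mesh-fineness given by a constant gauge converge.\<close>
definition riemann_integrable_on ::
  "(real \<Rightarrow> 'a::real_normed_vector) \<Rightarrow> real \<Rightarrow> real \<Rightarrow> bool" where
  "riemann_integrable_on f a b \<longleftrightarrow>
     (\<exists>I. \<forall>e>0. \<exists>d>0. \<forall>D. D tagged_division_of {a..b} \<and> (\<lambda>x. ball x d) fine D \<longrightarrow>
        norm ((\<Sum>(x,K)\<in>D. Henstock_Kurzweil_Integration.content K *\<^sub>R f x) - I) < e)"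

definition sigma_min :: "real^'n^'n \<Rightarrow> real" where
  "sigma_min A = Inf {norm (A *v x) | x. norm x = 1}"

definition Qbar :: "(real^'n^'n) set" where
  "Qbar = {R. transpose R = R \<and> (\<forall>x. 0 \<le> x \<bullet> (R *v x)) \<and> onorm (\<lambda>x. R *v x) \<le> 1}"

definition delta :: "real \<Rightarrow> real \<Rightarrow> real" where
  "delta \<epsilon> T = min (\<epsilon> / 2) (\<epsilon> ^ 3 / (240 * T ^ 5))"

text \<open>Sufficient excitation (sequence indexed from 0; t 0 = 0, t i = sum of T j for j < i).\<close>
definition sufficiently_exciting :: "(real \<Rightarrow> real^'n^'n) \<Rightarrow> bool" where
  "sufficiently_exciting Q \<longleftrightarrow>
     (\<exists>\<epsilon> T :: nat \<Rightarrow> real. (\<forall>i. 0 < \<epsilon> i \<and> 0 < T i) \<and>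
        (\<forall>i. sigma_min (integral {(\<Sum>j<i. T j) .. (\<Sum>j<i. T j) + T i} Q) \<ge> \<epsilon> i) \<and>
        \<not> summable (\<lambda>i. delta (\<epsilon> i) (T i)))"

definition interconnection :: "('p::finite \<Rightarrow> 'p \<Rightarrow> real) \<Rightarrow> bool" where
  "interconnection \<gamma> \<longleftrightarrow> (\<forall>i j. i \<noteq> j \<longrightarrow> 0 \<le> \<gamma> i j) \<and>
     (\<forall>i. \<gamma> i i = - (\<Sum>j\<in>UNIV - {i}. \<gamma> i j))"

definition connected_graph :: "('p::finite \<Rightarrow> 'p \<Rightarrow> real) \<Rightarrow> bool" where
  "connected_graph \<gamma> \<longleftrightarrow> (\<exists>k. \<forall>i. (i, k) \<in> {(a, b). 0 < \<gamma> a b}\<^sup>*)"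

end

theory Submission
  imports Defs
begin

text \<open>Let \<open>y\<^sub>i = x\<^sub>i - x\<^sub>\<infinity>\<close> with \<open>x\<^sub>\<infinity> = \<Sum>\<^sub>j r\<^sub>j x\<^sub>j(0)\<close>; since \<open>r\<^sup>T\<Gamma> = 0\<close>, the \<open>r\<close>-weighted mean of \<open>y\<close>
  stays \<open>0\<close>. For small \<open>h > 0\<close> the matrix \<open>A = I + h\<Gamma>\<close> is row-stochastic with positive diagonal
  and \<open>r\<^sup>TA = r\<^sup>T\<close>, and connectivity makes one column of some power \<open>A\<^sup>m\<close> uniformly positive;
  hence \<open>A\<^sup>k y \<rightarrow> 0\<close> geometrically on \<open>{y. r\<^sup>Ty = 0}\<close>, and \<open>V(y) = \<Sum>\<^sub>k |A\<^sup>ky|\<^sup>2\<close> is a quadratic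
  Lyapunov function comparable to \<open>|y|\<^sup>2\<close>. As \<open>\<Gamma> = (A - I)/h\<close>, a step \<open>y \<mapsto> y + (S\<otimes>\<Gamma>)y\<close>
  with \<open>S \<ge> 0\<close> decreases \<open>V\<close> by at least \<open>h\<^sup>-\<^sup>1 y\<^sup>T(I\<otimes>S)y\<close> up to second order terms.
  Subdividing an excitation window \<open>[t\<^sub>i, t\<^sub>i + T\<^sub>i]\<close> finely and using \<open>\<sigma>\<^sub>m\<^sub>i\<^sub>n(\<integral>Q) \<ge> \<epsilon>\<^sub>i\<close> yields
  \<open>V(t\<^sub>i\<^sub>+\<^sub>1) \<le> (1 - c \<delta>(\<epsilon>\<^sub>i,T\<^sub>i)) V(t\<^sub>i)\<close>, and divergence of \<open>\<Sum> \<delta>(\<epsilon>\<^sub>i,T\<^sub>i)\<close> forces \<open>V \<rightarrow> 0\<close>.\<close>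

lemma convex_combination_bounds:
  fixes c z :: "'p::finite \<Rightarrow> real"
  assumes c_nonneg: "\<And>j. 0 \<le> c j" and c_sum: "(\<Sum>j\<in>UNIV. c j) = 1" and c_k: "\<eta> \<le> c k"
    and z_bounds: "\<And>j. lo \<le> z j \<and> z j \<le> hi"
  shows "lo + \<eta> * (z k - lo) \<le> (\<Sum>j\<in>UNIV. c j * z j) \<and> (\<Sum>j\<in>UNIV. c j * z j) \<le> hi - \<eta> * (hi - z k)"
proof -
  have "(\<Sum>j\<in>UNIV. c j * (z j - b)) = (\<Sum>j\<in>UNIV. c j * z j) - b * (\<Sum>j\<in>UNIV. c j)" for b
    by (simp add: right_diff_distrib sum_subtractf sum_distrib_left mult.commute)
  moreover have "(\<Sum>j\<in>UNIV. c j * (z j - b)) = c k * (z k - b) + (\<Sum>j\<in>UNIV - {k}. c j * (z j - b))" for b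
    by (rule sum.remove) auto
  ultimately have split: "(\<Sum>j\<in>UNIV. c j * z j) - b = c k * (z k - b) + (\<Sum>j\<in>UNIV - {k}. c j * (z j - b))" for b
    using c_sum by simp
  have "(\<Sum>j\<in>UNIV - {k}. c j * (z j - hi)) \<le> 0"
    using c_nonneg z_bounds by (intro sum_nonpos) (simp add: mult_nonneg_nonpos)
  moreover have "0 \<le> (\<Sum>j\<in>UNIV - {k}. c j * (z j - lo))"
    using c_nonneg z_bounds by (intro sum_nonneg) simp
  moreover have "c k * (z k - hi) \<le> \<eta> * (z k - hi)" "\<eta> * (z k - lo) \<le> c k * (z k - lo)"
    using c_k z_bounds[of k] by (simp_all add: mult_right_mono_neg mult_right_mono)
  ultimately show ?thesis using split[of lo] split[of hi] by (auto simp: algebra_simps)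
qed

lemma abs_le_spread_if_weighted_sum_zero:
  fixes y r :: "'p::finite \<Rightarrow> real"
  assumes y_bounds: "\<And>j. lo \<le> y j \<and> y j \<le> hi" and ry: "(\<Sum>j\<in>UNIV. r j * y j) = 0"
    and r_sum: "(\<Sum>j\<in>UNIV. r j) = 1"
  shows "\<bar>y j\<bar> \<le> (1 + (\<Sum>i\<in>UNIV. \<bar>r i\<bar>)) * (hi - lo)"
proof -
  have "lo = (\<Sum>i\<in>UNIV. r i * lo) - (\<Sum>i\<in>UNIV. r i * y i)"
    using r_sum ry by (simp add: sum_distrib_right[symmetric])
  also have "\<dots> = (\<Sum>i\<in>UNIV. r i * (lo - y i))"
    by (simp add: sum_subtractf right_diff_distrib)
  finally have "\<bar>lo\<bar> = \<bar>\<Sum>i\<in>UNIV. r i * (lo - y i)\<bar>" by simp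
  also have "\<dots> \<le> (\<Sum>i\<in>UNIV. \<bar>r i * (lo - y i)\<bar>)" by (rule sum_abs)
  also have "\<dots> \<le> (\<Sum>i\<in>UNIV. \<bar>r i\<bar> * (hi - lo))"
    by (rule sum_mono) (use y_bounds in \<open>auto simp: abs_mult intro!: mult_left_mono\<close>)
  finally have "\<bar>lo\<bar> \<le> (\<Sum>i\<in>UNIV. \<bar>r i\<bar>) * (hi - lo)" by (simp add: sum_distrib_right)
  moreover have "\<bar>y j - lo\<bar> \<le> hi - lo" using y_bounds[of j] by auto
  ultimately show ?thesis by (simp add: algebra_simps)
qed

lemma summable_power_div:
  fixes d :: real
  assumes d0: "0 < d" and d1: "d < 1" and m0: "0 < m"
  shows "summable (\<lambda>k. d ^ (k div m))"
proof -
  define e where "e = d powr (1 / real m)"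
  have e0: "0 < e" unfolding e_def using d0 by simp
  have e1: "e < 1" unfolding e_def using d0 d1 m0 powr_less_mono2[of "1 / real m" d 1] by simp
  have bound: "d ^ (k div m) \<le> e ^ k / d" for k
  proof -
    have "real k = real m * real (k div m) + real (k mod m)"
      by (simp only: of_nat_mult[symmetric] of_nat_add[symmetric] mult_div_mod_eq)
    moreover have "real (k mod m) < real m" using m0 by simp
    ultimately have "real k / real m - 1 \<le> real (k div m)"
      using m0 by (simp add: field_simps)
    then have "d powr real (k div m) \<le> d powr (real k / real m - 1)"
      by (rule powr_mono') (use d0 d1 in auto)
    also have "\<dots> = e ^ k / d"
      unfolding e_def using d0 by (simp add: powr_diff powr_powr powr_realpow[symmetric])
    finally show ?thesis using d0 by (simp add: powr_realpow)
  qed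
  show ?thesis
    by (rule summable_comparison_test[OF _ summable_divide[OF summable_geometric]])
       (use bound d0 e0 e1 in auto)
qed

lemma le_if_le_add_div_nat:
  fixes X Y C :: real
  assumes "\<And>N::nat. 1 \<le> N \<Longrightarrow> X \<le> Y + C / real N"
  shows "X \<le> Y"
proof (rule ccontr)
  assume "\<not> X \<le> Y"
  then have d: "0 < X - Y" by simp
  obtain n :: nat where n: "max 1 (C / (X - Y)) < real n" using reals_Archimedean2 by blast
  then have "1 \<le> n" "C / real n < X - Y" using d by (simp_all add: field_simps)
  then show False using assms[of n] by simp
qed

lemma not_summable_min_mult:
  fixes \<delta> :: "nat \<Rightarrow> real"
  assumes "\<And>i. 0 \<le> \<delta> i" and "\<not> summable \<delta>" and "0 < c"
  shows "\<not> summable (\<lambda>i. min (c * \<delta> i) 1)"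
proof
  assume s: "summable (\<lambda>i. min (c * \<delta> i) 1)"
  then have "(\<lambda>i. min (c * \<delta> i) 1) \<longlonglongrightarrow> 0" by (rule summable_LIMSEQ_zero)
  then have "eventually (\<lambda>i. min (c * \<delta> i) 1 < 1) sequentially" by (rule order_tendstoD) simp
  then have "eventually (\<lambda>i. norm (\<delta> i) \<le> min (c * \<delta> i) 1 / c) sequentially"
    by (rule eventually_mono) (use assms in \<open>auto simp: min_def split: if_splits\<close>)
  then have "summable \<delta>" by (rule summable_comparison_test_ev) (rule summable_divide[OF s])
  with assms(2) show False by simp
qed

text \<open>Since \<open>1 - d \<le> exp (-d)\<close>, \<open>v n \<le> v 0 \<cdot> exp (-\<Sum>\<^sub>i\<^sub><\<^sub>n d i)\<close>.\<close>

lemma nonsummable_contraction_eventually_less: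
  fixes v d :: "nat \<Rightarrow> real"
  assumes v: "\<And>i. 0 \<le> v i" and d: "\<And>i. 0 \<le> d i"
    and step: "\<And>i. v (Suc i) \<le> (1 - d i) * v i" and ns: "\<not> summable d" and "0 < e"
  shows "\<exists>n. v n < e"
proof -
  have bound: "v n \<le> v 0 * exp (- (\<Sum>i<n. d i))" for n
  proof (induction n)
    case (Suc n)
    have "v (Suc n) \<le> exp (- d n) * v n"
      using step[of n] mult_right_mono[OF _ v, of "1 - d n" "exp (- d n)" n] exp_ge_add_one_self[of "- d n"]
      by simp
    also have "\<dots> \<le> exp (- d n) * (v 0 * exp (- (\<Sum>i<n. d i)))" by (rule mult_left_mono[OF Suc.IH]) simp
    also have "\<dots> = v 0 * exp (- d n + - (\<Sum>i<n. d i))" by (simp add: mult_exp_exp)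
    finally show ?case by (simp add: algebra_simps)
  qed simp
  define B where "B = v 0 / e"
  have "\<exists>n. B < (\<Sum>i<n. d i)"
    using ns summableI_nonneg_bounded[of d B, OF d] by (meson not_less)
  then obtain n where n: "B < (\<Sum>i<n. d i)" by blast
  have "0 \<le> B" unfolding B_def using v[of 0] \<open>0 < e\<close> by simp
  have "exp (- (\<Sum>i<n. d i)) \<le> 1 / (1 + B)"
  proof -
    have "exp (- (\<Sum>i<n. d i)) \<le> exp (- B)" using n by simp
    also have "\<dots> = 1 / exp B" by (simp add: exp_minus field_simps)
    also have "\<dots> \<le> 1 / (1 + B)" using exp_ge_add_one_self[of B] \<open>0 \<le> B\<close> by (intro divide_left_mono) auto
    finally show ?thesis .
  qed
  then have "v n \<le> v 0 * (1 / (1 + B))"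
    using bound[of n] mult_left_mono[OF _ v[of 0]] by (meson order_trans)
  also have "\<dots> < e" unfolding B_def using \<open>0 < e\<close> v[of 0] by (simp add: field_simps)
  finally show ?thesis by blast
qed

lemma delta_le:
  assumes "0 < \<epsilon>" "\<epsilon> \<le> T"
  shows "delta \<epsilon> T \<le> \<epsilon> / (2 * max 1 (T\<^sup>2))"
proof (cases "T \<le> 1")
  case True
  then have "max 1 (T\<^sup>2) = 1" using assms by (simp add: power_le_one)
  then show ?thesis unfolding delta_def by simp
next
  case False
  then have T: "1 < T" by simp
  have "\<epsilon> ^ 3 / (240 * T ^ 5) \<le> \<epsilon> * T\<^sup>2 / (240 * T ^ 5)"
    using assms power_mono[OF assms(2), of 2]
    by (intro divide_right_mono) (auto simp: power3_eq_cube power2_eq_square mult_left_mono)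
  also have "\<dots> = \<epsilon> / (240 * T ^ 3)" using T by (simp add: field_simps power_eq_if)
  also have "\<dots> \<le> \<epsilon> / (2 * T\<^sup>2)"
    using assms T by (intro divide_left_mono) (auto simp: power_increasing power3_eq_cube power2_eq_square)
  finally show ?thesis using T unfolding delta_def by (simp add: max_def)
qed

text \<open>A function \<open>'p \<Rightarrow> 'v\<close> on the finite set of agents stands for the stacked vector
  \<open>[x\<^sub>1\<^sup>T \<cdots> x\<^sub>p\<^sup>T]\<^sup>T\<close> of the paper.\<close>

definition stack_norm1 :: "('p::finite \<Rightarrow> 'v::real_normed_vector) \<Rightarrow> real" where
  "stack_norm1 X = (\<Sum>i\<in>UNIV. norm (X i))"

definition stack_sqnorm :: "('p::finite \<Rightarrow> 'v::real_normed_vector) \<Rightarrow> real" where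
  "stack_sqnorm X = (\<Sum>i\<in>UNIV. (norm (X i))\<^sup>2)"

definition stack_inner :: "('p::finite \<Rightarrow> 'v::real_inner) \<Rightarrow> ('p \<Rightarrow> 'v) \<Rightarrow> real" where
  "stack_inner X Y = (\<Sum>i\<in>UNIV. X i \<bullet> Y i)"

lemma stack_norm1_nonneg: "0 \<le> stack_norm1 X"
  unfolding stack_norm1_def by (simp add: sum_nonneg)

lemma stack_sqnorm_nonneg: "0 \<le> stack_sqnorm X"
  unfolding stack_sqnorm_def by (simp add: sum_nonneg)

lemma stack_norm1_squared_le: "(stack_norm1 X)\<^sup>2 \<le> real CARD('p) * stack_sqnorm (X :: 'p::finite \<Rightarrow> 'v::real_normed_vector)"
  unfolding stack_norm1_def stack_sqnorm_def using sum_squared_le_sum_of_squares[of "\<lambda>i. norm (X i)" UNIV]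
  by (simp add: mult.commute)

section \<open>The lazy consensus matrix and its Lyapunov form\<close>

locale consensus_network =
  fixes \<gamma> :: "'p::finite \<Rightarrow> 'p \<Rightarrow> real" and r :: "'p \<Rightarrow> real"
  assumes \<Gamma>: "interconnection \<gamma>" and conn: "connected_graph \<gamma>"
    and r_left: "\<And>j. (\<Sum>i\<in>UNIV. r i * \<gamma> i j) = 0" and r_sum: "(\<Sum>i\<in>UNIV. r i) = 1"
begin

text \<open>An Euler step \<open>h\<close> small enough that \<open>A = I + h\<Gamma>\<close> is row-stochastic with positive diagonal.\<close>

definition h :: real where "h = 1 / (1 + (\<Sum>i\<in>UNIV. \<bar>\<gamma> i i\<bar>))"
definition A :: "'p \<Rightarrow> 'p \<Rightarrow> real" where "A i j = of_bool (i = j) + h * \<gamma> i j"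

fun A_pow :: "nat \<Rightarrow> 'p \<Rightarrow> 'p \<Rightarrow> real" where
  "A_pow 0 i j = of_bool (i = j)"
| "A_pow (Suc k) i j = (\<Sum>l\<in>UNIV. A i l * A_pow k l j)"

lemma h_pos: "0 < h" unfolding h_def by (simp add: add_pos_nonneg sum_nonneg)

lemma h_mult_diag_gt: "- 1 < h * \<gamma> i i"
proof -
  have "\<bar>\<gamma> i i\<bar> \<le> (\<Sum>i\<in>UNIV. \<bar>\<gamma> i i\<bar>)" by (rule member_le_sum) auto
  then have "h * \<bar>\<gamma> i i\<bar> < 1" unfolding h_def by (simp add: field_simps add_pos_nonneg sum_nonneg)
  then have "\<bar>h * \<gamma> i i\<bar> < 1" using h_pos by (simp add: abs_mult)
  then show ?thesis by linarith
qed

lemma gamma_nonneg: "i \<noteq> j \<Longrightarrow> 0 \<le> \<gamma> i j" using \<Gamma> unfolding interconnection_def by auto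

lemma gamma_row_sum: "(\<Sum>j\<in>UNIV. \<gamma> i j) = 0"
  using \<Gamma> unfolding interconnection_def by (simp add: sum.remove[of UNIV i])

lemma A_nonneg: "0 \<le> A i j"
  using h_mult_diag_gt[of i] gamma_nonneg[of i j] h_pos unfolding A_def by (cases "i = j") auto

lemma A_diag_pos: "0 < A i i"
  using h_mult_diag_gt[of i] unfolding A_def by simp

lemma A_pos_if_edge: "0 < \<gamma> i j \<Longrightarrow> 0 < A i j"
  using A_diag_pos h_pos unfolding A_def by (cases "i = j") auto

lemma A_row_sum: "(\<Sum>j\<in>UNIV. A i j) = 1"
  unfolding A_def by (simp add: sum.distrib sum_distrib_left[symmetric] gamma_row_sum)

lemma r_A: "(\<Sum>i\<in>UNIV. r i * A i j) = r j"
  unfolding A_def by (simp add: distrib_left sum.distrib sum_distrib_left[symmetric] mult.left_commute r_left)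

lemma A_pow_nonneg: "0 \<le> A_pow k i j"
  by (induction k arbitrary: i j) (auto intro!: sum_nonneg mult_nonneg_nonneg A_nonneg)

lemma A_pow_row_sum: "(\<Sum>j\<in>UNIV. A_pow k i j) = 1"
proof (induction k arbitrary: i)
  case (Suc k)
  have "(\<Sum>j\<in>UNIV. A_pow (Suc k) i j) = (\<Sum>l\<in>UNIV. A i l * (\<Sum>j\<in>UNIV. A_pow k l j))"
    unfolding A_pow.simps sum_distrib_left by (rule sum.swap)
  then show ?case using Suc A_row_sum by simp
qed simp

lemma A_pow_ge_step: "A i l * A_pow k l j \<le> A_pow (Suc k) i j"
  by (simp del: A_pow.simps(1)) (rule member_le_sum, auto intro: mult_nonneg_nonneg A_nonneg A_pow_nonneg)

lemma A_pow_pos_mono: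
  assumes "k \<le> k'" "0 < A_pow k i j"
  shows "0 < A_pow k' i j"
  using assms(1)
proof (induction k' rule: dec_induct)
  case (step k')
  then show ?case using A_pow_ge_step[of i i k' j] mult_pos_pos[OF A_diag_pos[of i]] by fastforce
qed (use assms(2) in simp)

lemma A_pow_pos_if_path: "(i, k) \<in> {(a, b). 0 < \<gamma> a b}\<^sup>* \<Longrightarrow> \<exists>l. 0 < A_pow l i k"
proof (induction rule: converse_rtrancl_induct)
  case base then show ?case by (intro exI[of _ 0]) simp
next
  case (step y z)
  then obtain l where "0 < A_pow l z k" by auto
  moreover have "0 < A y z" using step(1) A_pos_if_edge by simp
  ultimately have "0 < A y z * A_pow l z k" by simp
  then show ?case using A_pow_ge_step[of y z l k] by (intro exI[of _ "Suc l"]) linarith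
qed

text \<open>\<open>k\<^sub>0\<close> is a root of the graph and \<open>m\<close> exceeds the length of a path to it from every node.\<close>

lemma A_pow_root_column:
  obtains m k0 \<eta> where "0 < m" "0 < \<eta>" "\<eta> \<le> 1/2" "\<And>i. \<eta> \<le> A_pow m i k0"
proof -
  obtain k0 where "\<And>i. (i, k0) \<in> {(a, b). 0 < \<gamma> a b}\<^sup>*"
    using conn unfolding connected_graph_def by auto
  then have "\<forall>i. \<exists>l. 0 < A_pow l i k0" using A_pow_pos_if_path by blast
  then obtain L where L: "\<And>i. 0 < A_pow (L i) i k0" by metis
  define m where "m = Suc (Max (range L))"
  have pos: "0 < A_pow m i k0" for i
    by (rule A_pow_pos_mono[OF _ L[of i]]) (simp add: m_def le_SucI)
  define \<eta> where "\<eta> = min (1/2) (Min (range (\<lambda>i. A_pow m i k0)))"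
  show ?thesis
  proof (rule that)
    show "0 < m" by (simp add: m_def)
    show "0 < \<eta>" using pos unfolding \<eta>_def by simp
    show "\<eta> \<le> 1/2" by (simp add: \<eta>_def)
    show "\<eta> \<le> A_pow m i k0" for i unfolding \<eta>_def by (rule min.coboundedI2) simp
  qed
qed

definition A_act :: "('p \<Rightarrow> 'v::real_vector) \<Rightarrow> 'p \<Rightarrow> 'v" where
  "A_act W = (\<lambda>i. \<Sum>j\<in>UNIV. A i j *\<^sub>R W j)"

definition r_mean :: "('p \<Rightarrow> 'v::real_vector) \<Rightarrow> 'v" where
  "r_mean W = (\<Sum>i\<in>UNIV. r i *\<^sub>R W i)"

lemma A_act_pow: "(A_act ^^ k) W i = (\<Sum>j\<in>UNIV. A_pow k i j *\<^sub>R W j)"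
proof (induction k arbitrary: i)
  case (Suc k)
  have "(A_act ^^ Suc k) W i = (\<Sum>l\<in>UNIV. A i l *\<^sub>R (A_act ^^ k) W l)"
    by (simp add: A_act_def[of "(A_act ^^ k) W"])
  also have "\<dots> = (\<Sum>l\<in>UNIV. A i l *\<^sub>R (\<Sum>j\<in>UNIV. A_pow k l j *\<^sub>R W j))"
    using Suc by simp
  also have "\<dots> = (\<Sum>j\<in>UNIV. A_pow (Suc k) i j *\<^sub>R W j)"
    unfolding A_pow.simps scaleR_sum_right scaleR_sum_left by (subst sum.swap) simp
  finally show ?case .
next
  case 0
  have "(\<Sum>j\<in>UNIV. of_bool (i = j) *\<^sub>R W j) = (\<Sum>j\<in>UNIV. if i = j then W j else 0)"
    by (intro sum.cong) auto
  then show ?case by simp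
qed

lemma r_mean_A_act_pow: "r_mean ((A_act ^^ k) W) = r_mean W"
proof (induction k)
  case (Suc k)
  have "r_mean (A_act V) = r_mean V" for V :: "'p \<Rightarrow> 'a"
    unfolding r_mean_def A_act_def scaleR_sum_right scaleR_sum_left
    by (subst sum.swap) (simp add: r_A flip: scaleR_sum_left)
  then show ?case using Suc by simp
qed simp

lemma A_act_pow_range:
  fixes z :: "'p \<Rightarrow> real"
  assumes "\<And>j. lo \<le> z j \<and> z j \<le> hi"
  shows "lo \<le> (A_act ^^ k) z i \<and> (A_act ^^ k) z i \<le> hi"
  using convex_combination_bounds[where c="A_pow k i" and \<eta>=0 and k=i and z=z and lo=lo and hi=hi] assms
  by (simp add: A_act_pow A_pow_nonneg A_pow_row_sum)

lemma A_act_pow_spread: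
  fixes z :: "'p \<Rightarrow> real"
  assumes col: "\<And>i. \<eta> \<le> A_pow m i k0" and \<eta>: "\<eta> \<le> 1"
    and z_bounds: "\<And>j. lo0 \<le> z j \<and> z j \<le> hi0"
  shows "\<exists>lo hi. (\<forall>j. lo \<le> (A_act ^^ (q * m)) z j \<and> (A_act ^^ (q * m)) z j \<le> hi)
    \<and> hi - lo \<le> (1 - \<eta>) ^ q * (hi0 - lo0)"
proof (induction q)
  case 0 then show ?case using z_bounds by auto
next
  case (Suc q)
  then obtain lo hi where bounds: "\<And>j. lo \<le> (A_act ^^ (q * m)) z j \<and> (A_act ^^ (q * m)) z j \<le> hi"
    and spread: "hi - lo \<le> (1 - \<eta>) ^ q * (hi0 - lo0)" by auto
  define y where "y = (A_act ^^ (q * m)) z"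
  have "(A_act ^^ (Suc q * m)) z j = (\<Sum>l\<in>UNIV. A_pow m j l * y l)" for j
    unfolding y_def by (simp add: funpow_add A_act_pow)
  then have new_bounds: "lo + \<eta> * (y k0 - lo) \<le> (A_act ^^ (Suc q * m)) z j
      \<and> (A_act ^^ (Suc q * m)) z j \<le> hi - \<eta> * (hi - y k0)" for j
    using convex_combination_bounds[where c="A_pow m j" and z=y and \<eta>=\<eta> and k=k0 and lo=lo and hi=hi] bounds col
    by (simp add: A_pow_nonneg A_pow_row_sum y_def)
  have "hi - \<eta> * (hi - y k0) - (lo + \<eta> * (y k0 - lo)) = (1 - \<eta>) * (hi - lo)" by (simp add: algebra_simps)
  also have "\<dots> \<le> (1 - \<eta>) ^ Suc q * (hi0 - lo0)"
    using mult_left_mono[OF spread, of "1 - \<eta>"] \<eta> by (simp add: mult.assoc)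
  finally show ?case using new_bounds by blast
qed

lemma A_pow_deviation:
  assumes col: "\<And>i. \<eta> \<le> A_pow m i k0" and \<eta>: "0 \<le> \<eta>" "\<eta> \<le> 1" and m: "0 < m"
  defines "R \<equiv> \<Sum>i\<in>UNIV. \<bar>r i\<bar>"
  shows "\<bar>A_pow k j l - r l\<bar> \<le> (1 + R) * (1 + 2 * R) * (1 - \<eta>) ^ (k div m)"
proof -
  define z where "z = (\<lambda>i. of_bool (i = l) - r l)"
  have "\<bar>r l\<bar> \<le> R" unfolding R_def by (rule member_le_sum) auto
  then have "- R \<le> z i \<and> z i \<le> 1 + R" for i unfolding z_def by auto
  then obtain lo hi where bounds: "\<forall>i. lo \<le> (A_act ^^ (k div m * m)) z i \<and> (A_act ^^ (k div m * m)) z i \<le> hi"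
    and spread: "hi - lo \<le> (1 - \<eta>) ^ (k div m) * (1 + R - - R)"
    using A_act_pow_spread[OF col \<eta>(2)] by blast
  have "(A_act ^^ k) z = (A_act ^^ (k mod m)) ((A_act ^^ (k div m * m)) z)"
    by (subst (1) mod_div_mult_eq[symmetric, of k m]) (simp only: funpow_add comp_apply)
  then have range: "lo \<le> (A_act ^^ k) z i \<and> (A_act ^^ k) z i \<le> hi" for i
    using A_act_pow_range[OF bounds[rule_format]] by simp
  have "r_mean z = 0"
    using r_sum unfolding r_mean_def z_def by (simp add: right_diff_distrib sum_subtractf flip: sum_distrib_right)
  then have mean: "(\<Sum>i\<in>UNIV. r i * (A_act ^^ k) z i) = 0"
    using r_mean_A_act_pow[of k z] by (simp add: r_mean_def)
  have "(A_act ^^ k) z j = A_pow k j l - r l"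
    using A_pow_row_sum[of k j] unfolding A_act_pow z_def
    by (simp add: right_diff_distrib sum_subtractf flip: sum_distrib_right)
  then have "\<bar>A_pow k j l - r l\<bar> \<le> (1 + R) * (hi - lo)"
    using abs_le_spread_if_weighted_sum_zero[OF range mean r_sum, of j] unfolding R_def by simp
  also have "\<dots> \<le> (1 + R) * ((1 - \<eta>) ^ (k div m) * (1 + 2 * R))"
    using spread by (intro mult_left_mono) (auto simp: R_def sum_nonneg add.commute)
  finally show ?thesis by (simp add: mult_ac)
qed

lemma A_pow_converges_geometrically:
  obtains K \<rho> m where "0 \<le> K" "0 < \<rho>" "\<rho> < 1" "0 < m"
    "\<And>k j l. \<bar>A_pow k j l - r l\<bar> \<le> K * \<rho> ^ (k div m)"
proof -
  obtain m k0 \<eta> where m: "0 < m" and \<eta>: "0 < \<eta>" "\<eta> \<le> 1/2" and col: "\<And>i. \<eta> \<le> A_pow m i k0"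
    by (rule A_pow_root_column, rule that)
  define R where "R = (\<Sum>i\<in>UNIV. \<bar>r i\<bar>)"
  have "0 \<le> R" by (simp add: R_def sum_nonneg)
  show ?thesis
  proof (rule that)
    show "0 \<le> (1 + R) * (1 + 2 * R)" using \<open>0 \<le> R\<close> by simp
    show "0 < 1 - \<eta>" "1 - \<eta> < 1" using \<eta> by simp_all
    show "\<bar>A_pow k j l - r l\<bar> \<le> (1 + R) * (1 + 2 * R) * (1 - \<eta>) ^ (k div m)" for k j l
      unfolding R_def by (rule A_pow_deviation[OF col]) (use \<eta> m in auto)
  qed (rule m)
qed

lemma A_act_pow_decay:
  obtains K \<rho> m where "0 \<le> K" "0 < \<rho>" "\<rho> < 1" "0 < m"
    "\<And>k j (W :: 'p \<Rightarrow> 'v::real_normed_vector). r_mean W = 0 \<Longrightarrow>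
       norm ((A_act ^^ k) W j) \<le> K * \<rho> ^ (k div m) * stack_norm1 W"
proof -
  obtain K \<rho> m where K: "0 \<le> K" "0 < \<rho>" "\<rho> < 1" "0 < m"
    and conv: "\<And>k j l. \<bar>A_pow k j l - r l\<bar> \<le> K * \<rho> ^ (k div m)"
    by (rule A_pow_converges_geometrically, rule that)
  have "norm ((A_act ^^ k) W j) \<le> K * \<rho> ^ (k div m) * stack_norm1 W"
    if "r_mean W = 0" for k j and W :: "'p \<Rightarrow> 'v"
  proof -
    have "(A_act ^^ k) W j = (\<Sum>l\<in>UNIV. A_pow k j l *\<^sub>R W l) - r_mean W"
      using that by (simp add: A_act_pow)
    also have "\<dots> = (\<Sum>l\<in>UNIV. (A_pow k j l - r l) *\<^sub>R W l)"
      by (simp add: r_mean_def scaleR_diff_left sum_subtractf)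
    finally have "norm ((A_act ^^ k) W j) \<le> (\<Sum>l\<in>UNIV. norm ((A_pow k j l - r l) *\<^sub>R W l))"
      by (simp only: norm_sum)
    also have "\<dots> \<le> (\<Sum>l\<in>UNIV. K * \<rho> ^ (k div m) * norm (W l))"
      by (rule sum_mono) (simp add: mult_right_mono conv)
    finally show ?thesis by (simp add: stack_norm1_def sum_distrib_left)
  qed
  with K show ?thesis by (rule that)
qed

lemma A_act_pow_tendsto_zero:
  fixes W :: "'p \<Rightarrow> 'v::real_normed_vector"
  assumes "r_mean W = 0"
  shows "(\<lambda>k. (A_act ^^ k) W j) \<longlonglongrightarrow> 0"
proof -
  obtain K \<rho> m where K: "0 \<le> K" "0 < \<rho>" "\<rho> < 1" "0 < m"
    and decay: "\<And>k j (W :: 'p \<Rightarrow> 'v). r_mean W = 0 \<Longrightarrow>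
       norm ((A_act ^^ k) W j) \<le> K * \<rho> ^ (k div m) * stack_norm1 W"
    by (rule A_act_pow_decay, rule that)
  have "(\<lambda>k. \<rho> ^ (k div m)) \<longlonglongrightarrow> 0"
    using K by (intro summable_LIMSEQ_zero summable_power_div)
  then have "(\<lambda>k. K * \<rho> ^ (k div m) * stack_norm1 W) \<longlonglongrightarrow> 0"
    by (intro tendsto_mult_left_zero tendsto_mult_right_zero)
  then show ?thesis
    by (rule Lim_null_comparison[rotated]) (use decay[OF assms] in auto)
qed

text \<open>The series converges only when \<open>r_mean W = 0 = r_mean U\<close>; elsewhere \<open>lyap\<close> is a junk value.\<close>

definition lyap :: "('p \<Rightarrow> 'v::real_inner) \<Rightarrow> ('p \<Rightarrow> 'v) \<Rightarrow> real" where
  "lyap W U = (\<Sum>k. stack_inner ((A_act ^^ k) W) ((A_act ^^ k) U))"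

lemma stack_inner_A_act_pow_decay:
  obtains K \<rho> m where "0 \<le> K" "0 < \<rho>" "\<rho> < 1" "0 < m"
    "\<And>k (W :: 'p \<Rightarrow> 'v::real_inner) U. r_mean W = 0 \<Longrightarrow> r_mean U = 0 \<Longrightarrow>
       \<bar>stack_inner ((A_act ^^ k) W) ((A_act ^^ k) U)\<bar> \<le> K * stack_norm1 W * stack_norm1 U * \<rho> ^ (k div m)"
proof -
  obtain K \<rho> m where K: "0 \<le> K" "0 < \<rho>" "\<rho> < 1" "0 < m"
    and decay: "\<And>k j (W :: 'p \<Rightarrow> 'v). r_mean W = 0 \<Longrightarrow>
       norm ((A_act ^^ k) W j) \<le> K * \<rho> ^ (k div m) * stack_norm1 W"
    by (rule A_act_pow_decay, rule that)
  show ?thesis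
  proof (rule that[of "real CARD('p) * K\<^sup>2" "\<rho>\<^sup>2" m])
    fix k and W U :: "'p \<Rightarrow> 'v" assume W: "r_mean W = 0" and U: "r_mean U = 0"
    have "\<bar>stack_inner ((A_act ^^ k) W) ((A_act ^^ k) U)\<bar>
        \<le> (\<Sum>j\<in>UNIV. norm ((A_act ^^ k) W j) * norm ((A_act ^^ k) U j))"
      unfolding stack_inner_def by (rule order_trans[OF sum_abs sum_mono]) (simp add: Cauchy_Schwarz_ineq2)
    also have "\<dots> \<le> (\<Sum>j\<in>(UNIV::'p set).
        (K * \<rho> ^ (k div m) * stack_norm1 W) * (K * \<rho> ^ (k div m) * stack_norm1 U))"
      using K by (intro sum_mono mult_mono decay W U) (auto intro!: mult_nonneg_nonneg stack_norm1_nonneg)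
    also have "\<dots> = real CARD('p) * K\<^sup>2 * stack_norm1 W * stack_norm1 U * (\<rho>\<^sup>2) ^ (k div m)"
      by (simp add: power_mult_distrib power_mult[symmetric] power2_eq_square mult_ac)
    finally show "\<bar>stack_inner ((A_act ^^ k) W) ((A_act ^^ k) U)\<bar>
        \<le> real CARD('p) * K\<^sup>2 * stack_norm1 W * stack_norm1 U * (\<rho>\<^sup>2) ^ (k div m)" .
  qed (use K in \<open>auto simp: power_less_one_iff\<close>)
qed

lemma lyap_summable_bounded:
  "\<exists>C\<ge>0. \<forall>W U :: 'p \<Rightarrow> 'v::real_inner. r_mean W = 0 \<longrightarrow> r_mean U = 0 \<longrightarrow>
     summable (\<lambda>k. stack_inner ((A_act ^^ k) W) ((A_act ^^ k) U))
     \<and> \<bar>lyap W U\<bar> \<le> C * stack_norm1 W * stack_norm1 U"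
proof -
  obtain K \<rho> m where K: "0 \<le> K" "0 < \<rho>" "\<rho> < 1" "0 < m"
    and decay: "\<And>k (W :: 'p \<Rightarrow> 'v) U. r_mean W = 0 \<Longrightarrow> r_mean U = 0 \<Longrightarrow>
       \<bar>stack_inner ((A_act ^^ k) W) ((A_act ^^ k) U)\<bar> \<le> K * stack_norm1 W * stack_norm1 U * \<rho> ^ (k div m)"
    by (rule stack_inner_A_act_pow_decay, rule that)
  have geom: "summable (\<lambda>k. \<rho> ^ (k div m))" using K by (intro summable_power_div)
  show ?thesis
  proof (intro exI[of _ "K * (\<Sum>k. \<rho> ^ (k div m))"] conjI allI impI)
    show "0 \<le> K * (\<Sum>k. \<rho> ^ (k div m))" using K by (intro mult_nonneg_nonneg suminf_nonneg geom) auto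
    fix W U :: "'p \<Rightarrow> 'v" assume W: "r_mean W = 0" and U: "r_mean U = 0"
    have sum_c: "summable (\<lambda>k. K * stack_norm1 W * stack_norm1 U * \<rho> ^ (k div m))"
      by (rule summable_mult[OF geom])
    have abs_sum: "summable (\<lambda>k. \<bar>stack_inner ((A_act ^^ k) W) ((A_act ^^ k) U)\<bar>)"
      by (rule summable_comparison_test[OF _ sum_c]) (use decay[OF W U] in auto)
    then show "summable (\<lambda>k. stack_inner ((A_act ^^ k) W) ((A_act ^^ k) U))"
      by (rule summable_rabs_cancel)
    have "\<bar>lyap W U\<bar> \<le> (\<Sum>k. \<bar>stack_inner ((A_act ^^ k) W) ((A_act ^^ k) U)\<bar>)"
      unfolding lyap_def by (rule summable_rabs[OF abs_sum])
    also have "\<dots> \<le> (\<Sum>k. K * stack_norm1 W * stack_norm1 U * \<rho> ^ (k div m))"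
      by (rule suminf_le[OF decay[OF W U] abs_sum sum_c])
    also have "\<dots> = K * (\<Sum>k. \<rho> ^ (k div m)) * stack_norm1 W * stack_norm1 U"
      by (subst suminf_mult[OF geom]) (simp add: mult_ac)
    finally show "\<bar>lyap W U\<bar> \<le> K * (\<Sum>k. \<rho> ^ (k div m)) * stack_norm1 W * stack_norm1 U" .
  qed
qed

lemma summable_lyap:
  fixes W U :: "'p \<Rightarrow> 'v::real_inner"
  assumes "r_mean W = 0" "r_mean U = 0"
  shows "summable (\<lambda>k. stack_inner ((A_act ^^ k) W) ((A_act ^^ k) U))"
  using lyap_summable_bounded[where 'v='v]
proof (elim exE conjE)
  fix C assume "\<forall>W U :: 'p \<Rightarrow> 'v. r_mean W = 0 \<longrightarrow> r_mean U = 0 \<longrightarrow>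
     summable (\<lambda>k. stack_inner ((A_act ^^ k) W) ((A_act ^^ k) U))
     \<and> \<bar>lyap W U\<bar> \<le> C * stack_norm1 W * stack_norm1 U"
  from this[rule_format, OF assms] show ?thesis by (rule conjunct1)
qed

lemma lyap_commute: "lyap W U = lyap U W"
  unfolding lyap_def stack_inner_def by (simp add: inner_commute)

lemma A_act_pow_add: "(A_act ^^ k) (\<lambda>i. U i + V i) j = (A_act ^^ k) U j + (A_act ^^ k) V j"
  by (simp add: A_act_pow scaleR_add_right sum.distrib)

lemma A_act_pow_diff: "(A_act ^^ k) (\<lambda>i. U i - V i) j = (A_act ^^ k) U j - (A_act ^^ k) V j"
  by (simp add: A_act_pow scaleR_diff_right sum_subtractf)

lemma A_act_pow_linear: "linear L \<Longrightarrow> (A_act ^^ k) (\<lambda>i. L (U i)) j = L ((A_act ^^ k) U j)"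
  by (simp add: A_act_pow linear_sum linear_scale)

lemma r_mean_linear: "linear L \<Longrightarrow> r_mean (\<lambda>i. L (U i)) = L (r_mean U)"
  by (simp add: r_mean_def linear_sum linear_scale)

lemma r_mean_add: "r_mean (\<lambda>i. U i + V i) = r_mean U + r_mean V"
  by (simp add: r_mean_def scaleR_add_right sum.distrib)

lemma r_mean_diff: "r_mean (\<lambda>i. U i - V i) = r_mean U - r_mean V"
  by (simp add: r_mean_def scaleR_diff_right sum_subtractf)

lemma lyap_add_right:
  fixes W U V :: "'p \<Rightarrow> 'v::real_inner"
  assumes "r_mean W = 0" "r_mean U = 0" "r_mean V = 0"
  shows "lyap W (\<lambda>i. U i + V i) = lyap W U + lyap W V"
proof -
  have "lyap W (\<lambda>i. U i + V i)
      = (\<Sum>k. stack_inner ((A_act ^^ k) W) ((A_act ^^ k) U) + stack_inner ((A_act ^^ k) W) ((A_act ^^ k) V))"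
    unfolding lyap_def stack_inner_def A_act_pow_add by (simp add: inner_add_right sum.distrib)
  also have "\<dots> = lyap W U + lyap W V"
    unfolding lyap_def by (rule suminf_add[symmetric]) (use summable_lyap assms in auto)
  finally show ?thesis .
qed

lemma lyap_add_add:
  fixes X D :: "'p \<Rightarrow> 'v::real_inner"
  assumes X: "r_mean X = 0" and D: "r_mean D = 0"
  shows "lyap (\<lambda>i. X i + D i) (\<lambda>i. X i + D i) = lyap X X + 2 * lyap X D + lyap D D"
proof -
  have XD: "r_mean (\<lambda>i. X i + D i) = 0" using X D by (simp add: r_mean_add)
  show ?thesis
    using lyap_add_right[OF XD X D] lyap_add_right[OF X X D] lyap_add_right[OF D X D]
      lyap_commute[of "\<lambda>i. X i + D i" X] lyap_commute[of "\<lambda>i. X i + D i" D] lyap_commute[of D X]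
    by linarith
qed

lemma stack_inner_le_lyap:
  fixes W :: "'p \<Rightarrow> 'v::real_inner"
  assumes "r_mean W = 0"
  shows "stack_inner W W \<le> lyap W W"
  using sum_le_suminf[OF summable_lyap[OF assms assms], of "{0}"]
  unfolding lyap_def stack_inner_def by (simp add: sum_nonneg)

definition Gamma_act :: "('p \<Rightarrow> 'v::real_vector) \<Rightarrow> 'p \<Rightarrow> 'v" where
  "Gamma_act W = (\<lambda>i. \<Sum>j\<in>UNIV. \<gamma> i j *\<^sub>R W j)"

lemma Gamma_act_eq: "Gamma_act W i = (1 / h) *\<^sub>R (A_act W i - W i)"
proof -
  have "A_act W i = (\<Sum>j\<in>UNIV. of_bool (i = j) *\<^sub>R W j) + h *\<^sub>R Gamma_act W i"
    by (simp add: A_act_def Gamma_act_def A_def scaleR_add_left sum.distrib scaleR_sum_right)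
  also have "(\<Sum>j\<in>UNIV. of_bool (i = j) *\<^sub>R W j) = W i"
    using A_act_pow[of 0 W i] by simp
  finally show ?thesis using h_pos by simp
qed

lemma r_mean_Gamma_act: "r_mean (Gamma_act W) = 0"
proof -
  have "r_mean (Gamma_act W) = (\<Sum>j\<in>UNIV. (\<Sum>i\<in>UNIV. r i * \<gamma> i j) *\<^sub>R W j)"
    unfolding r_mean_def Gamma_act_def scaleR_sum_right scaleR_sum_left by (subst sum.swap) simp
  then show ?thesis by (simp add: r_left)
qed

lemma inner_psd_diff_le:
  fixes L :: "'v::real_inner \<Rightarrow> 'v"
  assumes "linear L" and sym: "\<And>a b. a \<bullet> L b = b \<bullet> L a" and psd: "\<And>a. 0 \<le> a \<bullet> L a"
  shows "a \<bullet> L (b - a) \<le> (b \<bullet> L b - a \<bullet> L a) / 2"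
proof -
  have "(b - a) \<bullet> L (b - a) = b \<bullet> L b - 2 * (a \<bullet> L b) + a \<bullet> L a"
    using sym[of b a] by (simp add: linear_diff[OF \<open>linear L\<close>] inner_diff_left inner_diff_right)
  moreover have "a \<bullet> L (b - a) = a \<bullet> L b - a \<bullet> L a"
    by (simp add: linear_diff[OF \<open>linear L\<close>] inner_diff_right)
  ultimately show ?thesis using psd[of "b - a"] by simp
qed

lemma A_act_pow_Gamma_act:
  "(A_act ^^ k) (Gamma_act Z) j = (1/h) *\<^sub>R ((A_act ^^ Suc k) Z j - (A_act ^^ k) Z j)"
proof -
  have "linear (\<lambda>v::'a. (1/h) *\<^sub>R v)" by (simp add: linear_iff scaleR_add_right)
  from A_act_pow_linear[OF this, of k "\<lambda>i. A_act Z i - Z i" j] show ?thesis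
    unfolding Gamma_act_eq[abs_def] A_act_pow_diff by (simp flip: funpow_swap1)
qed

lemma stack_inner_A_act_pow_Gamma_act_le:
  fixes Z :: "'p \<Rightarrow> 'v::real_inner" and L :: "'v \<Rightarrow> 'v"
  assumes lin: "linear L" and sym: "\<And>a b. a \<bullet> L b = b \<bullet> L a" and psd: "\<And>a. 0 \<le> a \<bullet> L a"
  defines "q \<equiv> \<lambda>X :: 'p \<Rightarrow> 'v. \<Sum>i\<in>UNIV. X i \<bullet> L (X i)"
  shows "stack_inner ((A_act ^^ k) Z) ((A_act ^^ k) (\<lambda>i. L (Gamma_act Z i)))
    \<le> (q ((A_act ^^ Suc k) Z) - q ((A_act ^^ k) Z)) / (2 * h)"
proof -
  define W where "W k = (A_act ^^ k) Z" for k
  have "stack_inner (W k) ((A_act ^^ k) (\<lambda>i. L (Gamma_act Z i)))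
      = (1/h) * (\<Sum>i\<in>UNIV. W k i \<bullet> L (W (Suc k) i - W k i))"
    unfolding stack_inner_def A_act_pow_linear[OF lin] A_act_pow_Gamma_act W_def
    by (simp add: linear_scale[OF lin] sum_distrib_left)
  also have "\<dots> \<le> (1/h) * (\<Sum>i\<in>UNIV. (W (Suc k) i \<bullet> L (W (Suc k) i) - W k i \<bullet> L (W k i)) / 2)"
    using h_pos by (intro mult_left_mono sum_mono inner_psd_diff_le[OF lin sym psd]) auto
  also have "\<dots> = (q (W (Suc k)) - q (W k)) / (2 * h)"
    unfolding q_def by (simp add: sum_divide_distrib[symmetric] sum_subtractf)
  finally show ?thesis unfolding W_def .
qed

text \<open>The discrete-time decrease \<open>V(AZ) = V(Z) - |Z|\<^sup>2\<close> turns, through \<open>\<Gamma> = (A - I)/h\<close>, into a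
  decrease of \<open>V\<close> along \<open>(L\<otimes>\<Gamma>)Z\<close> for every positive semidefinite \<open>L\<close>; the sum telescopes.\<close>

lemma lyap_Gamma_act_le:
  fixes Z :: "'p \<Rightarrow> 'v::real_inner" and L :: "'v \<Rightarrow> 'v"
  assumes Z: "r_mean Z = 0" and bl: "bounded_linear L"
    and sym: "\<And>a b. a \<bullet> L b = b \<bullet> L a" and psd: "\<And>a. 0 \<le> a \<bullet> L a"
  shows "2 * lyap Z (\<lambda>i. L (Gamma_act Z i)) \<le> - (1 / h) * (\<Sum>i\<in>UNIV. Z i \<bullet> L (Z i))"
proof -
  have lin: "linear L" using bl by (rule bounded_linear.linear)
  define W where "W k = (A_act ^^ k) Z" for k
  define q where "q X = (\<Sum>i\<in>UNIV. X i \<bullet> L (X i))" for X :: "'p \<Rightarrow> 'v"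
  have LG: "r_mean (\<lambda>i. L (Gamma_act Z i)) = 0"
    using r_mean_linear[OF lin, of "Gamma_act Z"] r_mean_Gamma_act[of Z] linear_0[OF lin] by simp
  have "(\<Sum>k<N. stack_inner (W k) ((A_act ^^ k) (\<lambda>i. L (Gamma_act Z i))))
      \<le> (\<Sum>k<N. (q (W (Suc k)) - q (W k)) / (2 * h))" for N
    unfolding W_def q_def by (intro sum_mono stack_inner_A_act_pow_Gamma_act_le[OF lin sym psd])
  also have "\<dots> N = (q (W N) - q Z) / (2 * h)" for N
    by (simp only: sum_divide_distrib[symmetric] sum_lessThan_telescope[of "\<lambda>k. q (W k)"]) (simp add: W_def)
  finally have partial: "(\<Sum>k<N. stack_inner (W k) ((A_act ^^ k) (\<lambda>i. L (Gamma_act Z i))))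
      \<le> (q (W N) - q Z) / (2 * h)" for N .
  have "(\<lambda>N. \<Sum>k<N. stack_inner (W k) ((A_act ^^ k) (\<lambda>i. L (Gamma_act Z i))))
      \<longlonglongrightarrow> lyap Z (\<lambda>i. L (Gamma_act Z i))"
    unfolding lyap_def W_def by (rule summable_LIMSEQ[OF summable_lyap[OF Z LG]])
  moreover have "(\<lambda>N. W N i \<bullet> L (W N i)) \<longlonglongrightarrow> 0 \<bullet> L 0" for i
    using A_act_pow_tendsto_zero[OF Z] unfolding W_def by (intro tendsto_inner bounded_linear.tendsto[OF bl])
  then have "(\<lambda>N. q (W N)) \<longlonglongrightarrow> 0"
    unfolding q_def by (intro tendsto_null_sum) simp
  then have "(\<lambda>N. (q (W N) - q Z) / (2 * h)) \<longlonglongrightarrow> (0 - q Z) / (2 * h)"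
    by (intro tendsto_divide tendsto_diff tendsto_const) (use h_pos in auto)
  ultimately have "lyap Z (\<lambda>i. L (Gamma_act Z i)) \<le> (0 - q Z) / (2 * h)"
    using partial by (intro LIMSEQ_le) auto
  then show ?thesis using h_pos by (simp add: q_def field_simps)
qed

end

section \<open>Positive semidefinite matrices and integrals of \<open>Q\<close>\<close>

definition symmetric_matrix :: "real^'n^'n \<Rightarrow> bool" where
  "symmetric_matrix S \<longleftrightarrow> (\<forall>x y. x \<bullet> (S *v y) = y \<bullet> (S *v x))"

definition psd_matrix :: "real^'n^'n \<Rightarrow> bool" where
  "psd_matrix S \<longleftrightarrow> (\<forall>x. 0 \<le> x \<bullet> (S *v x))"

lemma discriminant_le_if_quadratic_nonneg:
  fixes a b c :: real
  assumes nonneg: "\<And>t. 0 \<le> a + 2 * c * t + b * t\<^sup>2" and "0 \<le> b"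
  shows "c\<^sup>2 \<le> a * b"
proof (cases "b = 0")
  case True
  have "0 \<le> a + 2 * c * (- (a + 1) / (2 * c)) + b * (- (a + 1) / (2 * c))\<^sup>2" by (rule nonneg)
  then show ?thesis using True by (cases "c = 0") (simp_all add: field_simps)
next
  case False
  then have "0 < b" using \<open>0 \<le> b\<close> by simp
  have "0 \<le> a + 2 * c * (- c / b) + b * (- c / b)\<^sup>2" by (rule nonneg)
  then show ?thesis using \<open>0 < b\<close> by (simp add: field_simps power2_eq_square)
qed

lemma quadratic_form_add_scaled:
  assumes "symmetric_matrix S"
  shows "(a + t *\<^sub>R b) \<bullet> (S *v (a + t *\<^sub>R b))
    = a \<bullet> (S *v a) + 2 * (a \<bullet> (S *v b)) * t + (b \<bullet> (S *v b)) * t\<^sup>2"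
  using assms unfolding symmetric_matrix_def
  by (simp add: matrix_vector_right_distrib matrix_vector_mult_scaleR inner_add_left inner_add_right
      power2_eq_square algebra_simps)

lemma psd_abs_cross_le:
  assumes "symmetric_matrix S" "psd_matrix S"
  shows "2 * \<bar>a \<bullet> (S *v b)\<bar> \<le> a \<bullet> (S *v a) + b \<bullet> (S *v b)"
  using quadratic_form_add_scaled[OF assms(1), of a 1 b] quadratic_form_add_scaled[OF assms(1), of a "-1" b]
    assms(2)[unfolded psd_matrix_def, rule_format, of "a + b"]
    assms(2)[unfolded psd_matrix_def, rule_format, of "a + (-1) *\<^sub>R b"]
  by (simp add: abs_if)

lemma psd_cauchy_schwarz:
  assumes "symmetric_matrix S" "psd_matrix S"
  shows "(a \<bullet> (S *v b))\<^sup>2 \<le> (a \<bullet> (S *v a)) * (b \<bullet> (S *v b))"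
proof (rule discriminant_le_if_quadratic_nonneg)
  show "0 \<le> a \<bullet> (S *v a) + 2 * (a \<bullet> (S *v b)) * t + (b \<bullet> (S *v b)) * t\<^sup>2" for t
    using assms(2) quadratic_form_add_scaled[OF assms(1), of a t b] unfolding psd_matrix_def by metis
  show "0 \<le> b \<bullet> (S *v b)" using assms(2) unfolding psd_matrix_def by blast
qed

lemma psd_norm_squared_le:
  assumes S: "symmetric_matrix S" "psd_matrix S" and bound: "\<And>v. v \<bullet> (S *v v) \<le> c * (norm v)\<^sup>2"
    and "0 \<le> c"
  shows "(norm (S *v z))\<^sup>2 \<le> c * (z \<bullet> (S *v z))"
proof -
  define u where "u = S *v z"
  have uu: "(norm u)\<^sup>2 = z \<bullet> (S *v u)"
    using S(1) unfolding symmetric_matrix_def u_def by (simp add: power2_norm_eq_inner)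
  have "((norm u)\<^sup>2)\<^sup>2 \<le> (z \<bullet> (S *v z)) * (u \<bullet> (S *v u))"
    unfolding uu by (rule psd_cauchy_schwarz[OF S])
  also have "\<dots> \<le> (z \<bullet> (S *v z)) * (c * (norm u)\<^sup>2)"
    by (rule mult_left_mono[OF bound]) (use S(2) in \<open>simp add: psd_matrix_def\<close>)
  finally have le: "(norm u)\<^sup>2 * (norm u)\<^sup>2 \<le> (c * (z \<bullet> (S *v z))) * (norm u)\<^sup>2"
    by (simp add: power2_eq_square mult_ac)
  show ?thesis
  proof (cases "u = 0")
    case True
    then show ?thesis using S(2) \<open>0 \<le> c\<close> unfolding u_def psd_matrix_def by simp
  next
    case False
    then have "0 < (norm u)\<^sup>2" by simp
    with le show ?thesis unfolding u_def using mult_le_cancel_right_pos by blast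
  qed
qed

lemma sigma_min_le_norm:
  fixes S :: "real^'n^'n"
  assumes "norm v = 1"
  shows "sigma_min S \<le> norm (S *v v)"
  unfolding sigma_min_def
  by (rule cInf_lower) (use assms in \<open>auto simp: bdd_below_def intro: exI[of _ 0]\<close>)

lemma quadratic_form_min_on_sphere:
  fixes S :: "real^'n^'n"
  obtains v0 where "norm v0 = 1" "\<And>y. (v0 \<bullet> (S *v v0)) * (norm y)\<^sup>2 \<le> y \<bullet> (S *v y)"
proof -
  define \<phi> where "\<phi> v = v \<bullet> (S *v v)" for v :: "real^'n"
  have "continuous_on (sphere 0 1) \<phi>" unfolding \<phi>_def
    by (intro continuous_on_inner continuous_on_id linear_continuous_on matrix_vector_mul_bounded_linear)
  moreover have "sphere (0::real^'n) 1 \<noteq> {}"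
    using norm_axis_1[of undefined] by (auto simp: dist_norm)
  ultimately obtain v0 where v0: "v0 \<in> sphere 0 1" and min: "\<And>y. y \<in> sphere 0 1 \<Longrightarrow> \<phi> v0 \<le> \<phi> y"
    using continuous_attains_inf[OF compact_sphere] by blast
  have "\<phi> v0 * (norm y)\<^sup>2 \<le> \<phi> y" for y
  proof (cases "y = 0")
    case False
    have "\<phi> v0 \<le> \<phi> ((1 / norm y) *\<^sub>R y)" by (rule min) (use False in simp)
    also have "\<dots> = \<phi> y / (norm y)\<^sup>2"
      by (simp add: \<phi>_def matrix_vector_mult_scaleR power2_eq_square)
    finally show ?thesis using False by (simp add: field_simps)
  qed (simp add: \<phi>_def)
  with v0 that show ?thesis unfolding \<phi>_def by simp
qed

text \<open>A minimiser of the Rayleigh quotient is an eigenvector: perturbing it in the direction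
  \<open>w = Sv\<^sub>0 - mv\<^sub>0\<close> gives a quadratic in \<open>t\<close> with vanishing constant term, so \<open>w = 0\<close>.\<close>

lemma rayleigh_minimiser_eigenvector:
  fixes S :: "real^'n^'n"
  assumes S: "symmetric_matrix S" and v0: "norm v0 = 1"
    and min: "\<And>y. m * (norm y)\<^sup>2 \<le> y \<bullet> (S *v y)" and m: "m = v0 \<bullet> (S *v v0)"
  shows "S *v v0 = m *\<^sub>R v0"
proof -
  define w where "w = S *v v0 - m *\<^sub>R v0"
  have vv: "v0 \<bullet> v0 = 1" using v0 by (simp add: power2_norm_eq_inner[symmetric])
  have "S *v v0 = w + m *\<^sub>R v0" by (simp add: w_def)
  then have sw: "v0 \<bullet> (S *v w) = w \<bullet> w + m * (v0 \<bullet> w)"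
    using S[unfolded symmetric_matrix_def, rule_format, of v0 w] by (simp add: inner_add_right inner_commute)
  have "0 \<le> 0 + 2 * (w \<bullet> w) * t + (w \<bullet> (S *v w) - m * (norm w)\<^sup>2) * t\<^sup>2" for t
  proof -
    have "(norm (v0 + t *\<^sub>R w))\<^sup>2 = v0 \<bullet> v0 + 2 * (v0 \<bullet> w) * t + (w \<bullet> w) * t\<^sup>2"
      unfolding power2_norm_eq_inner
      by (simp add: inner_add_left inner_add_right inner_commute algebra_simps power2_eq_square)
    then have "(norm (v0 + t *\<^sub>R w))\<^sup>2 = 1 + 2 * (v0 \<bullet> w) * t + (norm w)\<^sup>2 * t\<^sup>2"
      using vv by (simp add: power2_norm_eq_inner)
    then show ?thesis
      using min[of "v0 + t *\<^sub>R w"] quadratic_form_add_scaled[OF S, of v0 t w] sw m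
      by (simp add: algebra_simps)
  qed
  moreover have "0 \<le> w \<bullet> (S *v w) - m * (norm w)\<^sup>2" using min[of w] by simp
  ultimately have "(w \<bullet> w)\<^sup>2 \<le> 0 * (w \<bullet> (S *v w) - m * (norm w)\<^sup>2)"
    by (intro discriminant_le_if_quadratic_nonneg) blast+
  then show ?thesis by (simp add: w_def)
qed

lemma psd_quadratic_ge_sigma_min:
  fixes S :: "real^'n^'n"
  assumes "symmetric_matrix S" "psd_matrix S"
  shows "sigma_min S * (norm y)\<^sup>2 \<le> y \<bullet> (S *v y)"
proof -
  obtain v0 where v0: "norm v0 = 1" and min: "\<And>y. (v0 \<bullet> (S *v v0)) * (norm y)\<^sup>2 \<le> y \<bullet> (S *v y)"
    by (rule quadratic_form_min_on_sphere[of S], rule that)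
  define m where "m = v0 \<bullet> (S *v v0)"
  have "S *v v0 = m *\<^sub>R v0"
    unfolding m_def by (rule rayleigh_minimiser_eigenvector[OF assms(1) v0 min refl])
  moreover have "0 \<le> m" using assms(2) unfolding psd_matrix_def m_def by blast
  ultimately have "norm (S *v v0) = m" using v0 by simp
  then have "sigma_min S \<le> m" using sigma_min_le_norm[OF v0, of S] by simp
  then show ?thesis using min[of y] unfolding m_def by (meson mult_right_mono order_trans zero_le_power2)
qed

definition stack_quad :: "real^'n^'n \<Rightarrow> ('p::finite \<Rightarrow> real^'n) \<Rightarrow> real" where
  "stack_quad S W = (\<Sum>i\<in>UNIV. W i \<bullet> (S *v W i))"

lemma stack_quad_nonneg: "psd_matrix S \<Longrightarrow> 0 \<le> stack_quad S W"
  unfolding stack_quad_def psd_matrix_def by (simp add: sum_nonneg)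

lemma stack_quad_le_twice:
  assumes "symmetric_matrix S" "psd_matrix S"
  shows "stack_quad S X \<le> 2 * stack_quad S Z + 2 * stack_quad S (\<lambda>i. X i - Z i)"
proof -
  have "X i \<bullet> (S *v X i) \<le> 2 * (Z i \<bullet> (S *v Z i)) + 2 * ((X i - Z i) \<bullet> (S *v (X i - Z i)))" for i
    using quadratic_form_add_scaled[OF assms(1), of "Z i" 1 "X i - Z i"] psd_abs_cross_le[OF assms, of "Z i" "X i - Z i"]
    by simp
  then show ?thesis unfolding stack_quad_def by (simp add: sum_distrib_left sum.distrib[symmetric] sum_mono)
qed

lemma stack_quad_le_sqnorm:
  assumes "\<And>v. v \<bullet> (S *v v) \<le> c * (norm v)\<^sup>2"
  shows "stack_quad S W \<le> c * stack_sqnorm W"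
  unfolding stack_quad_def stack_sqnorm_def sum_distrib_left by (rule sum_mono) (rule assms)

lemma stack_quad_sum: "stack_quad (\<Sum>k\<in>K. S k) W = (\<Sum>k\<in>K. stack_quad (S k) W)"
proof (induction K rule: infinite_finite_induct)
  case (insert k K)
  then show ?case
    by (simp add: stack_quad_def matrix_vector_mult_add_rdistrib inner_add_right sum.distrib)
qed (simp_all add: stack_quad_def)

lemma psd_quadratic_weighted_sum_le:
  fixes c :: "'p::finite \<Rightarrow> real" and z :: "'p \<Rightarrow> real^'n"
  assumes S: "symmetric_matrix S" "psd_matrix S"
  shows "(\<Sum>j\<in>UNIV. c j *\<^sub>R z j) \<bullet> (S *v (\<Sum>j\<in>UNIV. c j *\<^sub>R z j))
    \<le> (\<Sum>j\<in>UNIV. \<bar>c j\<bar>) * (\<Sum>j\<in>UNIV. \<bar>c j\<bar> * (z j \<bullet> (S *v z j)))"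
proof -
  define q where "q j = z j \<bullet> (S *v z j)" for j
  have "(\<Sum>j\<in>UNIV. c j *\<^sub>R z j) \<bullet> (S *v (\<Sum>j\<in>UNIV. c j *\<^sub>R z j))
      = (\<Sum>j\<in>UNIV. \<Sum>l\<in>UNIV. c j * c l * (z j \<bullet> (S *v z l)))"
    by (simp add: inner_sum_left inner_sum_right vec.sum matrix_vector_mult_scaleR sum_distrib_left mult_ac)
      (subst sum.swap, simp add: mult_ac)
  also have "\<dots> \<le> (\<Sum>j\<in>UNIV. \<Sum>l\<in>UNIV. \<bar>c j\<bar> * \<bar>c l\<bar> * ((q j + q l) / 2))"
  proof (intro sum_mono)
    fix j l
    have "c j * c l * (z j \<bullet> (S *v z l)) \<le> \<bar>c j\<bar> * \<bar>c l\<bar> * \<bar>z j \<bullet> (S *v z l)\<bar>"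
      by (metis abs_ge_self abs_mult)
    also have "\<dots> \<le> \<bar>c j\<bar> * \<bar>c l\<bar> * ((q j + q l) / 2)"
      using psd_abs_cross_le[OF S, of "z j" "z l"] by (intro mult_left_mono) (auto simp: q_def)
    finally show "c j * c l * (z j \<bullet> (S *v z l)) \<le> \<bar>c j\<bar> * \<bar>c l\<bar> * ((q j + q l) / 2)" .
  qed
  also have "\<dots> = ((\<Sum>j\<in>UNIV. \<Sum>l\<in>UNIV. \<bar>c j\<bar> * \<bar>c l\<bar> * q j)
      + (\<Sum>l\<in>UNIV. \<Sum>j\<in>UNIV. \<bar>c j\<bar> * \<bar>c l\<bar> * q l)) / 2"
    by (subst (2) sum.swap) (simp add: distrib_left add_divide_distrib sum.distrib sum_divide_distrib)
  also have "\<dots> = (\<Sum>j\<in>UNIV. \<bar>c j\<bar>) * (\<Sum>j\<in>UNIV. \<bar>c j\<bar> * q j)"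
    by (simp add: sum_distrib_left sum_distrib_right mult_ac)
  finally show ?thesis unfolding q_def .
qed

lemma Qbar_symmetric: "R \<in> Qbar \<Longrightarrow> symmetric_matrix R"
  unfolding Qbar_def symmetric_matrix_def
  by (metis (mono_tags, lifting) dot_lmul_matrix inner_commute mem_Collect_eq transpose_matrix_vector)

lemma Qbar_psd: "R \<in> Qbar \<Longrightarrow> psd_matrix R"
  unfolding Qbar_def psd_matrix_def by auto

lemma Qbar_norm_le: "R \<in> Qbar \<Longrightarrow> norm (R *v x) \<le> norm x"
  unfolding Qbar_def using onorm[OF matrix_vector_mul_bounded_linear, of R x]
  by (auto intro: order_trans mult_right_mono[of _ 1 "norm x", simplified])

lemma riemann_integrable_imp_integrable_on:
  assumes "riemann_integrable_on f a b"
  shows "f integrable_on {a..b}"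
proof -
  obtain I where I: "\<forall>e>0. \<exists>d>0. \<forall>D. D tagged_division_of {a..b} \<and> (\<lambda>x. ball x d) fine D \<longrightarrow>
        norm ((\<Sum>(x,K)\<in>D. Henstock_Kurzweil_Integration.content K *\<^sub>R f x) - I) < e"
    using assms unfolding riemann_integrable_on_def by blast
  have "(f has_integral I) (cbox a b)"
    unfolding has_integral
  proof (intro allI impI)
    fix e :: real assume "e > 0"
    then obtain d where "d > 0" "\<forall>D. D tagged_division_of {a..b} \<and> (\<lambda>x. ball x d) fine D \<longrightarrow>
        norm ((\<Sum>(x,K)\<in>D. Henstock_Kurzweil_Integration.content K *\<^sub>R f x) - I) < e" using I by blast
    then show "\<exists>\<gamma>. gauge \<gamma> \<and> (\<forall>\<D>. \<D> tagged_division_of cbox a b \<and> \<gamma> fine \<D> \<longrightarrow>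
        norm ((\<Sum>(x, k)\<in>\<D>. Henstock_Kurzweil_Integration.content k *\<^sub>R f x) - I) < e)"
      by (intro exI[of _ "\<lambda>x. ball x d"]) (auto simp: gauge_ball)
  qed
  then show ?thesis by (auto simp: integrable_on_def)
qed

lemma bounded_linear_matrix_vector_left: "bounded_linear (\<lambda>M::real^'n^'m. M *v v)"
proof -
  have "linear (\<lambda>M::real^'n^'m. M *v v)"
    by (auto simp: linear_iff matrix_vector_mult_def vec_eq_iff sum.distrib algebra_simps sum_distrib_left)
  then show ?thesis by (simp add: linear_conv_bounded_linear)
qed

lemma has_integral_matrix_vector:
  fixes Q :: "real \<Rightarrow> real^'n^'m"
  assumes "Q integrable_on S"
  shows "((\<lambda>u. Q u *v v) has_integral (integral S Q *v v)) S"
  using has_integral_linear[OF integrable_integral[OF assms] bounded_linear_matrix_vector_left] by (simp add: o_def)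

lemma has_integral_quadratic_form:
  fixes Q :: "real \<Rightarrow> real^'n^'n"
  assumes "Q integrable_on S"
  shows "((\<lambda>u. x \<bullet> (Q u *v y)) has_integral (x \<bullet> (integral S Q *v y))) S"
  using has_integral_linear[OF has_integral_matrix_vector[OF assms] bounded_linear_inner_right] by (simp add: o_def)

context
  fixes Q :: "real \<Rightarrow> real^'n^'n" and a b :: real
  assumes Q_int: "Q integrable_on {a..b}" and Q_Qbar: "\<And>u. u \<in> {a..b} \<Longrightarrow> Q u \<in> Qbar"
begin

lemma integral_Qbar_symmetric: "symmetric_matrix (integral {a..b} Q)"
  unfolding symmetric_matrix_def
proof (intro allI)
  fix v w :: "real^'n"
  have "((\<lambda>u. v \<bullet> (Q u *v w)) has_integral (w \<bullet> (integral {a..b} Q *v v))) {a..b}"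
    by (rule has_integral_eq[OF _ has_integral_quadratic_form[OF Q_int, of w v]])
      (use Qbar_symmetric[OF Q_Qbar] in \<open>auto simp: symmetric_matrix_def\<close>)
  then show "v \<bullet> (integral {a..b} Q *v w) = w \<bullet> (integral {a..b} Q *v v)"
    by (rule has_integral_unique[OF has_integral_quadratic_form[OF Q_int]])
qed

lemma integral_Qbar_psd: "psd_matrix (integral {a..b} Q)"
  unfolding psd_matrix_def
  using Qbar_psd[OF Q_Qbar] unfolding psd_matrix_def
  by (auto intro!: has_integral_nonneg[OF has_integral_quadratic_form[OF Q_int]])

lemma integral_Qbar_quadratic_le:
  assumes "a \<le> b"
  shows "v \<bullet> (integral {a..b} Q *v v) \<le> (b - a) * (norm v)\<^sup>2"
proof -
  have "v \<bullet> (integral {a..b} Q *v v) \<le> Henstock_Kurzweil_Integration.content {a..b} *\<^sub>R (norm v)\<^sup>2"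
  proof (rule has_integral_le[OF has_integral_quadratic_form[OF Q_int] has_integral_const_real])
    fix u assume "u \<in> {a..b}"
    have "v \<bullet> (Q u *v v) \<le> norm v * norm (Q u *v v)" by (rule norm_cauchy_schwarz)
    also have "\<dots> \<le> norm v * norm v" by (rule mult_left_mono[OF Qbar_norm_le[OF Q_Qbar[OF \<open>u \<in> {a..b}\<close>]]]) simp
    finally show "v \<bullet> (Q u *v v) \<le> (norm v)\<^sup>2" by (simp add: power2_eq_square)
  qed
  then show ?thesis using assms by simp
qed

end

section \<open>Trajectories\<close>

lemma has_integral_norm_le_real:
  fixes f :: "real \<Rightarrow> 'a::real_normed_vector"
  assumes "(f has_integral I) {s..t}" "s \<le> t" "\<And>u. u \<in> {s..t} \<Longrightarrow> norm (f u) \<le> B"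
  shows "norm I \<le> B * (t - s)"
proof -
  have "0 \<le> B" using assms(3)[of s] assms(2) by (meson atLeastAtMost_iff norm_ge_zero order_refl order_trans)
  then show ?thesis using has_integral_bound_real[of B "{}" f I s t] assms by (simp add: content_real)
qed

locale consensus_dynamics = consensus_network \<gamma> r for \<gamma> :: "'p::finite \<Rightarrow> 'p \<Rightarrow> real" and r +
  fixes Q :: "real \<Rightarrow> real^'n^'n" and x :: "'p \<Rightarrow> real \<Rightarrow> real^'n"
  assumes Qbar: "\<And>t. 0 \<le> t \<Longrightarrow> Q t \<in> Qbar"
    and Qriem: "\<And>a b. 0 \<le> a \<Longrightarrow> a \<le> b \<Longrightarrow> riemann_integrable_on Q a b"
    and sol: "\<And>i t. 0 \<le> t \<Longrightarrow>
       ((\<lambda>s. Q s *v (\<Sum>j\<in>UNIV - {i}. \<gamma> i j *\<^sub>R (x j s - x i s))) has_integral (x i t - x i 0)) {0..t}"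
begin

definition xbar :: "real^'n" where "xbar = (\<Sum>j\<in>UNIV. r j *\<^sub>R x j 0)"
definition dev :: "real \<Rightarrow> 'p \<Rightarrow> real^'n" where "dev t = (\<lambda>i. x i t - xbar)"
definition gamma_norm :: real where "gamma_norm = (\<Sum>i\<in>UNIV. \<Sum>j\<in>UNIV. \<bar>\<gamma> i j\<bar>)"

abbreviation energy :: "real \<Rightarrow> real" where "energy t \<equiv> lyap (dev t) (dev t)"

lemma gamma_norm_nonneg: "0 \<le> gamma_norm" unfolding gamma_norm_def by (simp add: sum_nonneg)

lemma row_abs_sum_le_gamma_norm: "(\<Sum>j\<in>UNIV. \<bar>\<gamma> i j\<bar>) \<le> gamma_norm"
  unfolding gamma_norm_def by (rule member_le_sum[of i]) (auto simp: sum_nonneg)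

lemma abs_gamma_le_gamma_norm: "\<bar>\<gamma> i j\<bar> \<le> gamma_norm"
  using member_le_sum[of j UNIV "\<lambda>j. \<bar>\<gamma> i j\<bar>"] row_abs_sum_le_gamma_norm[of i] by simp

lemma norm_Gamma_act_le: "norm (Gamma_act W i) \<le> gamma_norm * stack_norm1 W"
proof -
  have "norm (Gamma_act W i) \<le> (\<Sum>j\<in>UNIV. \<bar>\<gamma> i j\<bar> * norm (W j))"
    unfolding Gamma_act_def by (rule order_trans[OF norm_sum]) simp
  also have "\<dots> \<le> (\<Sum>j\<in>UNIV. gamma_norm * norm (W j))"
    by (rule sum_mono) (simp add: mult_right_mono abs_gamma_le_gamma_norm)
  finally show ?thesis by (simp add: stack_norm1_def sum_distrib_left)
qed

lemma Gamma_act_diff: "Gamma_act (\<lambda>j. U j - V j) i = Gamma_act U i - Gamma_act V i"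
  unfolding Gamma_act_def by (simp add: scaleR_diff_right sum_subtractf)

lemma coupling_eq_Gamma_act_dev:
  "(\<Sum>j\<in>UNIV - {i}. \<gamma> i j *\<^sub>R (x j s - x i s)) = Gamma_act (dev s) i"
proof -
  have "\<gamma> i i = - (\<Sum>j\<in>UNIV - {i}. \<gamma> i j)" using \<Gamma> unfolding interconnection_def by auto
  then have "Gamma_act (dev s) i = (\<Sum>j\<in>UNIV - {i}. \<gamma> i j *\<^sub>R (x j s - xbar)) - (\<Sum>j\<in>UNIV - {i}. \<gamma> i j *\<^sub>R (x i s - xbar))"
    unfolding Gamma_act_def dev_def by (simp add: sum.remove[of UNIV i] scaleR_sum_left)
  also have "\<dots> = (\<Sum>j\<in>UNIV - {i}. \<gamma> i j *\<^sub>R (x j s - x i s))"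
    by (simp add: sum_subtractf[symmetric] scaleR_diff_right[symmetric])
  finally show ?thesis ..
qed

lemma Q_integrable: "0 \<le> a \<Longrightarrow> a \<le> b \<Longrightarrow> Q integrable_on {a..b}"
  by (rule riemann_integrable_imp_integrable_on[OF Qriem])

lemma window_symmetric: "0 \<le> a \<Longrightarrow> a \<le> b \<Longrightarrow> symmetric_matrix (integral {a..b} Q)"
  by (rule integral_Qbar_symmetric[OF Q_integrable]) (auto intro: Qbar)

lemma window_psd: "0 \<le> a \<Longrightarrow> a \<le> b \<Longrightarrow> psd_matrix (integral {a..b} Q)"
  by (rule integral_Qbar_psd[OF Q_integrable]) (auto intro: Qbar)

lemma window_quadratic_le: "0 \<le> a \<Longrightarrow> a \<le> b \<Longrightarrow> v \<bullet> (integral {a..b} Q *v v) \<le> (b - a) * (norm v)\<^sup>2"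
  by (rule integral_Qbar_quadratic_le[OF Q_integrable]) (auto intro: Qbar)

lemma dev_has_integral_from_0:
  "0 \<le> t \<Longrightarrow> ((\<lambda>u. Q u *v Gamma_act (dev u) i) has_integral (dev t i - dev 0 i)) {0..t}"
  using sol[of t i] by (simp add: coupling_eq_Gamma_act_dev dev_def)

lemma dev_has_integral:
  assumes "0 \<le> s" "s \<le> t"
  shows "((\<lambda>u. Q u *v Gamma_act (dev u) i) has_integral (dev t i - dev s i)) {s..t}"
proof -
  define f where "f u = Q u *v Gamma_act (dev u) i" for u
  have int_t: "f integrable_on {0..t}"
    using dev_has_integral_from_0[of t i] assms unfolding f_def by (auto simp: integrable_on_def)
  have "integral {0..s} f + integral {s..t} f = integral {0..t} f"
    by (rule Henstock_Kurzweil_Integration.integral_combine) (use assms int_t in auto)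
  moreover have "integral {0..t} f = dev t i - dev 0 i" "integral {0..s} f = dev s i - dev 0 i"
    using dev_has_integral_from_0[of t i] dev_has_integral_from_0[of s i] assms unfolding f_def
    by (auto intro: integral_unique)
  moreover have "f integrable_on {s..t}" by (rule integrable_subinterval_real[OF int_t]) (use assms in auto)
  ultimately have "f integrable_on {s..t} \<and> integral {s..t} f = dev t i - dev s i"
    by (simp add: algebra_simps)
  then show ?thesis unfolding f_def has_integral_integrable_integral by blast
qed

lemma r_mean_dev:
  assumes "0 \<le> t"
  shows "r_mean (dev t) = 0"
proof -
  have int: "((\<lambda>u. \<Sum>i\<in>UNIV. r i *\<^sub>R (Q u *v Gamma_act (dev u) i))
      has_integral (\<Sum>i\<in>UNIV. r i *\<^sub>R (dev t i - dev 0 i))) {0..t}"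
    using assms by (intro has_integral_sum has_integral_cmul dev_has_integral_from_0) auto
  have "(\<Sum>i\<in>UNIV. r i *\<^sub>R (Q u *v Gamma_act (dev u) i)) = Q u *v r_mean (Gamma_act (dev u))" for u
    unfolding r_mean_def by (simp add: vec.sum matrix_vector_mult_scaleR)
  then have "(\<lambda>u. \<Sum>i\<in>UNIV. r i *\<^sub>R (Q u *v Gamma_act (dev u) i)) = (\<lambda>u. 0)"
    by (simp add: r_mean_Gamma_act)
  with int have "(\<Sum>i\<in>UNIV. r i *\<^sub>R (dev t i - dev 0 i)) = 0"
    by (auto intro: has_integral_unique[OF _ has_integral_0])
  then have "r_mean (dev t) = r_mean (dev 0)"
    unfolding r_mean_def by (simp add: scaleR_diff_right sum_subtractf)
  also have "r_mean (dev 0) = 0"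
    unfolding r_mean_def dev_def xbar_def by (simp add: scaleR_diff_right sum_subtractf r_sum flip: scaleR_sum_left)
  finally show ?thesis .
qed

lemma dev_continuous_on:
  assumes "0 \<le> b"
  shows "continuous_on {0..b} (\<lambda>t. dev t i)"
proof -
  define f where "f u = Q u *v Gamma_act (dev u) i" for u
  have "f integrable_on {0..b}"
    using dev_has_integral_from_0[OF assms, of i] unfolding f_def by (auto simp: integrable_on_def)
  then have cont: "continuous_on {0..b} (\<lambda>t. dev 0 i + integral {0..t} f)"
    by (intro continuous_intros indefinite_integral_continuous_1)
  have "dev t i = dev 0 i + integral {0..t} f" if "t \<in> {0..b}" for t
    using dev_has_integral_from_0[of t i] that unfolding f_def by (auto dest: integral_unique)
  then show ?thesis using continuous_on_cong[OF refl] cont by (metis (no_types, lifting))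
qed

lemma dev_bounded:
  assumes "0 \<le> b"
  obtains M where "0 \<le> M" "\<And>t. t \<in> {0..b} \<Longrightarrow> stack_norm1 (dev t) \<le> M"
proof -
  have "continuous_on {0..b} (\<lambda>t. stack_norm1 (dev t))" unfolding stack_norm1_def
    by (intro continuous_on_sum continuous_on_norm dev_continuous_on assms)
  then have "bounded ((\<lambda>t. stack_norm1 (dev t)) ` {0..b})"
    by (rule compact_imp_bounded[OF compact_continuous_image[OF _ compact_Icc]])
  then obtain B where B: "\<And>t. t \<in> {0..b} \<Longrightarrow> norm (stack_norm1 (dev t)) \<le> B"
    unfolding bounded_iff by blast
  show ?thesis
  proof (rule that[of "max B 0"])
    fix t assume "t \<in> {0..b}"
    then show "stack_norm1 (dev t) \<le> max B 0" using B[of t] by simp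
  qed simp
qed

definition lyap_const :: real where
  "lyap_const = (SOME C. 0 \<le> C \<and> (\<forall>W U :: 'p \<Rightarrow> real^'n. r_mean W = 0 \<longrightarrow> r_mean U = 0 \<longrightarrow>
     \<bar>lyap W U\<bar> \<le> C * stack_norm1 W * stack_norm1 U))"

lemma lyap_const_spec: "0 \<le> lyap_const \<and> (\<forall>W U :: 'p \<Rightarrow> real^'n. r_mean W = 0 \<longrightarrow> r_mean U = 0 \<longrightarrow>
     \<bar>lyap W U\<bar> \<le> lyap_const * stack_norm1 W * stack_norm1 U)"
  unfolding lyap_const_def
proof (rule someI_ex)
  show "\<exists>C. 0 \<le> C \<and> (\<forall>W U :: 'p \<Rightarrow> real^'n. r_mean W = 0 \<longrightarrow> r_mean U = 0 \<longrightarrow>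
     \<bar>lyap W U\<bar> \<le> C * stack_norm1 W * stack_norm1 U)"
    using lyap_summable_bounded[where 'v="real^'n"]
  proof (elim exE conjE)
    fix C assume "0 \<le> C" and C: "\<forall>W U :: 'p \<Rightarrow> real^'n. r_mean W = 0 \<longrightarrow> r_mean U = 0 \<longrightarrow>
       summable (\<lambda>k. stack_inner ((A_act ^^ k) W) ((A_act ^^ k) U))
       \<and> \<bar>lyap W U\<bar> \<le> C * stack_norm1 W * stack_norm1 U"
    show ?thesis
    proof (intro exI[of _ C] conjI allI impI)
      fix W U :: "'p \<Rightarrow> real^'n" assume "r_mean W = 0" "r_mean U = 0"
      then show "\<bar>lyap W U\<bar> \<le> C * stack_norm1 W * stack_norm1 U" using C by simp
    qed (rule \<open>0 \<le> C\<close>)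
  qed
qed

lemma lyap_const_nonneg: "0 \<le> lyap_const"
  using lyap_const_spec by blast

lemma abs_lyap_le:
  fixes W U :: "'p \<Rightarrow> real^'n"
  shows "r_mean W = 0 \<Longrightarrow> r_mean U = 0 \<Longrightarrow> \<bar>lyap W U\<bar> \<le> lyap_const * stack_norm1 W * stack_norm1 U"
  using lyap_const_spec by blast

lemma lyap_le_if_norm1_le:
  fixes W U :: "'p \<Rightarrow> real^'n"
  assumes "r_mean W = 0" "r_mean U = 0" "stack_norm1 W \<le> c" "stack_norm1 U \<le> d"
  shows "lyap W U \<le> lyap_const * c * d"
proof -
  have "lyap W U \<le> lyap_const * stack_norm1 W * stack_norm1 U"
    using abs_lyap_le[OF assms(1,2)] by (rule abs_le_D1)
  also have "\<dots> \<le> lyap_const * c * d"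
    using assms(3,4) lyap_const_nonneg stack_norm1_nonneg[of W] stack_norm1_nonneg[of U]
    by (intro mult_mono mult_left_mono) (auto intro: order_trans)
  finally show ?thesis .
qed

context
  fixes b M :: real
  assumes M: "\<And>u. u \<in> {0..b} \<Longrightarrow> stack_norm1 (dev u) \<le> M"
begin

lemma dev_increment_le:
  assumes "0 \<le> s" "s \<le> t" "t \<le> b"
  shows "norm (dev t i - dev s i) \<le> gamma_norm * M * (t - s)"
proof (rule has_integral_norm_le_real[OF dev_has_integral[OF assms(1,2)] assms(2)])
  fix u assume u: "u \<in> {s..t}"
  have "norm (Q u *v Gamma_act (dev u) i) \<le> norm (Gamma_act (dev u) i)"
    by (rule Qbar_norm_le[OF Qbar]) (use u assms in auto)
  also have "\<dots> \<le> gamma_norm * stack_norm1 (dev u)" by (rule norm_Gamma_act_le)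
  also have "\<dots> \<le> gamma_norm * M" by (rule mult_left_mono[OF M gamma_norm_nonneg]) (use u assms in auto)
  finally show "norm (Q u *v Gamma_act (dev u) i) \<le> gamma_norm * M" .
qed

lemma stack_norm1_dev_increment_le:
  assumes "0 \<le> s" "s \<le> t" "t \<le> b"
  shows "stack_norm1 (\<lambda>i. dev t i - dev s i) \<le> real CARD('p) * gamma_norm * M * (t - s)"
  using sum_mono[of UNIV "\<lambda>i. norm (dev t i - dev s i)", OF dev_increment_le[OF assms]]
  unfolding stack_norm1_def by (simp add: mult_ac)

lemma dev_increment_approx:
  assumes "0 \<le> s" "s \<le> t" "t \<le> b" "0 \<le> M"
  shows "norm (dev t i - dev s i - integral {s..t} Q *v Gamma_act (dev s) i)
    \<le> gamma_norm * real CARD('p) * gamma_norm * M * (t - s)\<^sup>2"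
proof -
  have "((\<lambda>u. Q u *v Gamma_act (dev u) i - Q u *v Gamma_act (dev s) i)
      has_integral (dev t i - dev s i - integral {s..t} Q *v Gamma_act (dev s) i)) {s..t}"
    using assms by (intro has_integral_diff dev_has_integral has_integral_matrix_vector Q_integrable)
  then have "norm (dev t i - dev s i - integral {s..t} Q *v Gamma_act (dev s) i)
      \<le> (gamma_norm * (real CARD('p) * gamma_norm * M * (t - s))) * (t - s)"
  proof (rule has_integral_norm_le_real[OF _ assms(2)])
    fix u assume u: "u \<in> {s..t}"
    have "stack_norm1 (\<lambda>j. dev u j - dev s j) \<le> real CARD('p) * gamma_norm * M * (u - s)"
      by (rule stack_norm1_dev_increment_le) (use u assms in auto)
    also have "\<dots> \<le> real CARD('p) * gamma_norm * M * (t - s)"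
      using u assms gamma_norm_nonneg by (intro mult_left_mono) auto
    finally have increment: "stack_norm1 (\<lambda>j. dev u j - dev s j) \<le> real CARD('p) * gamma_norm * M * (t - s)" .
    have "norm (Q u *v Gamma_act (dev u) i - Q u *v Gamma_act (dev s) i)
        \<le> norm (Gamma_act (\<lambda>j. dev u j - dev s j) i)"
      using Qbar_norm_le[OF Qbar] u assms by (simp add: Gamma_act_diff flip: matrix_vector_mult_diff_distrib)
    also have "\<dots> \<le> gamma_norm * stack_norm1 (\<lambda>j. dev u j - dev s j)" by (rule norm_Gamma_act_le)
    also have "\<dots> \<le> gamma_norm * (real CARD('p) * gamma_norm * M * (t - s))"
      by (rule mult_left_mono[OF increment gamma_norm_nonneg])
    finally show "norm (Q u *v Gamma_act (dev u) i - Q u *v Gamma_act (dev s) i)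
        \<le> gamma_norm * (real CARD('p) * gamma_norm * M * (t - s))" .
  qed
  then show ?thesis by (simp add: power2_eq_square mult_ac)
qed

lemma stack_norm1_dev_remainder_le:
  assumes "0 \<le> s" "s \<le> t" "t \<le> b" "0 \<le> M"
  shows "stack_norm1 (\<lambda>i. dev t i - dev s i - integral {s..t} Q *v Gamma_act (dev s) i)
    \<le> real CARD('p) * (gamma_norm * real CARD('p) * gamma_norm * M * (t - s)\<^sup>2)"
  using sum_mono[of UNIV "\<lambda>i. norm (dev t i - dev s i - integral {s..t} Q *v Gamma_act (dev s) i)",
      OF dev_increment_approx[OF assms]]
  by (simp add: stack_norm1_def)

text \<open>Write \<open>dev t = X + P + E\<close> with \<open>X = dev s\<close>, the first-order increment \<open>P = (\<integral>\<^sub>s\<^sup>tQ \<otimes> \<Gamma>) X\<close> and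
  a remainder \<open>E\<close> of order \<open>(t - s)\<^sup>2\<close>: the cross term \<open>2 lyap X P\<close> gives the decrease and the
  terms \<open>2 lyap X E\<close> and \<open>lyap (P + E) (P + E)\<close> are of order \<open>(t - s)\<^sup>2\<close>.\<close>

lemma energy_step_le:
  assumes s: "0 \<le> s" and st: "s \<le> t" and tb: "t \<le> b" and "0 \<le> M"
  shows "energy t \<le> energy s - stack_quad (integral {s..t} Q) (dev s) / h
    + 3 * lyap_const * (real CARD('p) * gamma_norm * M)\<^sup>2 * (t - s)\<^sup>2"
proof -
  define X where "X = dev s"
  define S where "S = integral {s..t} Q"
  define D where "D = (\<lambda>i. dev t i - dev s i)"
  define P where "P = (\<lambda>i. S *v Gamma_act X i)"
  define E where "E = (\<lambda>i. D i - P i)"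
  define c where "c = real CARD('p) * gamma_norm * M"
  have rX: "r_mean X = 0" unfolding X_def by (rule r_mean_dev[OF s])
  have rD: "r_mean D = 0" unfolding D_def using r_mean_dev s st by (simp add: r_mean_diff)
  have rP: "r_mean P = 0"
    unfolding P_def using r_mean_linear[OF matrix_vector_mul_linear, of S "Gamma_act X"] by (simp add: r_mean_Gamma_act)
  have rE: "r_mean E = 0" unfolding E_def using rD rP by (simp add: r_mean_diff)
  have "energy t = lyap X X + 2 * lyap X P + 2 * lyap X E + lyap D D"
    using lyap_add_add[OF rX rD] lyap_add_right[OF rX rP rE]
    unfolding X_def D_def E_def by (simp add: algebra_simps)
  moreover have "2 * lyap X P \<le> - (1 / h) * stack_quad S X"
    unfolding P_def stack_quad_def
    by (rule lyap_Gamma_act_le[OF rX matrix_vector_mul_bounded_linear])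
      (use window_symmetric[OF s st] window_psd[OF s st] in \<open>auto simp: S_def symmetric_matrix_def psd_matrix_def\<close>)
  moreover have "lyap X E \<le> lyap_const * M * (real CARD('p) * (gamma_norm * c * (t - s)\<^sup>2))"
    by (rule lyap_le_if_norm1_le[OF rX rE])
      (use M[of s] stack_norm1_dev_remainder_le[OF s st tb \<open>0 \<le> M\<close>] s st tb in
        \<open>simp_all add: X_def E_def D_def P_def S_def c_def mult_ac\<close>)
  moreover have "lyap D D \<le> lyap_const * (c * (t - s)) * (c * (t - s))"
    by (rule lyap_le_if_norm1_le[OF rD rD]; unfold c_def D_def; rule stack_norm1_dev_increment_le[OF s st tb])
  moreover have "lyap_const * M * (real CARD('p) * (gamma_norm * c * (t - s)\<^sup>2)) = lyap_const * c\<^sup>2 * (t - s)\<^sup>2"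
    "lyap_const * (c * (t - s)) * (c * (t - s)) = lyap_const * c\<^sup>2 * (t - s)\<^sup>2"
    "- (1 / h) * stack_quad S X = - (stack_quad S X / h)"
    by (simp_all add: c_def power2_eq_square mult_ac)
  ultimately show ?thesis unfolding X_def S_def c_def by linarith
qed

end

definition window_gain :: "real \<Rightarrow> real" where
  "window_gain T = 2 + 4 * real CARD('p) * T\<^sup>2 * gamma_norm\<^sup>2"

lemma window_gain_pos: "0 < window_gain T"
  unfolding window_gain_def by (simp add: add_pos_nonneg)

lemma quadratic_Gamma_act_le:
  assumes S: "symmetric_matrix S" "psd_matrix S"
  shows "Gamma_act W i \<bullet> (S *v Gamma_act W i) \<le> gamma_norm\<^sup>2 * stack_quad S W"
proof -
  have "Gamma_act W i \<bullet> (S *v Gamma_act W i)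
      \<le> (\<Sum>j\<in>UNIV. \<bar>\<gamma> i j\<bar>) * (\<Sum>j\<in>UNIV. \<bar>\<gamma> i j\<bar> * (W j \<bullet> (S *v W j)))"
    unfolding Gamma_act_def by (rule psd_quadratic_weighted_sum_le[OF S])
  also have "\<dots> \<le> gamma_norm * (\<Sum>j\<in>UNIV. gamma_norm * (W j \<bullet> (S *v W j)))"
    using S(2) unfolding psd_matrix_def
    by (intro mult_mono sum_mono mult_right_mono row_abs_sum_le_gamma_norm abs_gamma_le_gamma_norm
        gamma_norm_nonneg sum_nonneg mult_nonneg_nonneg) auto
  also have "\<dots> = gamma_norm\<^sup>2 * stack_quad S W"
    unfolding stack_quad_def by (simp add: sum_distrib_left power2_eq_square mult_ac)
  finally show ?thesis .
qed

end

section \<open>Subdivision of an excitation window\<close>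

locale subdivided_window = consensus_dynamics \<gamma> r Q x
  for \<gamma> :: "'p::finite \<Rightarrow> 'p \<Rightarrow> real" and r and Q :: "real \<Rightarrow> real^'n^'n" and x +
  fixes a T :: real and N :: nat and M :: real
  assumes a: "0 \<le> a" and T: "0 < T" and N: "1 \<le> N" and M_nonneg: "0 \<le> M"
    and M_bound: "\<And>u. u \<in> {0..a+T} \<Longrightarrow> stack_norm1 (dev u) \<le> M"
begin

definition width :: real where "width = T / real N"
definition node :: "nat \<Rightarrow> real" where "node k = a + real k * width"
definition slice :: "nat \<Rightarrow> real^'n^'n" where "slice k = integral {node k..node (Suc k)} Q"
definition slice_quad :: "nat \<Rightarrow> real" where "slice_quad k = stack_quad (slice k) (dev (node k))"
definition quad_total :: real where "quad_total = (\<Sum>k<N. slice_quad k)"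
definition approx_const :: real where "approx_const = gamma_norm * real CARD('p) * gamma_norm * M"
definition step_const :: real where "step_const = 3 * lyap_const * (real CARD('p) * gamma_norm * M)\<^sup>2"

lemma width_pos: "0 < width" unfolding width_def using T N by simp
lemma N_width: "real N * width = T" unfolding width_def using N by simp
lemma node_0: "node 0 = a" unfolding node_def by simp
lemma node_Suc: "node (Suc k) = node k + width" unfolding node_def by (simp add: algebra_simps)
lemma node_N: "node N = a + T" unfolding node_def using N_width by simp
lemma node_ge: "a \<le> node k" unfolding node_def using width_pos by simp
lemma node_nonneg: "0 \<le> node k" using node_ge a by (rule order_trans[rotated])
lemma node_mono: "node k \<le> node (Suc k)" using node_Suc width_pos by simp
lemma node_le:
  assumes "k \<le> N"
  shows "node k \<le> a + T"
proof -
  have "real k * width \<le> real N * width" using assms width_pos by (intro mult_right_mono) auto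
  then show ?thesis unfolding node_def N_width by simp
qed

lemma approx_const_nonneg: "0 \<le> approx_const"
  unfolding approx_const_def using gamma_norm_nonneg M_nonneg by simp

lemma slice_symmetric: "symmetric_matrix (slice k)"
  unfolding slice_def by (rule window_symmetric[OF node_nonneg node_mono])

lemma slice_psd: "psd_matrix (slice k)"
  unfolding slice_def by (rule window_psd[OF node_nonneg node_mono])

lemma slice_quadratic_le: "v \<bullet> (slice k *v v) \<le> width * (norm v)\<^sup>2"
  using window_quadratic_le[OF node_nonneg[of k] node_mono[of k], of v] unfolding slice_def by (simp add: node_Suc)

lemma slice_quad_nonneg: "0 \<le> slice_quad k"
  unfolding slice_quad_def by (rule stack_quad_nonneg[OF slice_psd])

lemma sum_slices: "n \<le> N \<Longrightarrow> (\<Sum>k<n. slice k) = integral {a..node n} Q"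
proof (induction n)
  case (Suc n)
  have "integral {a..node n} Q + integral {node n..node (Suc n)} Q = integral {a..node (Suc n)} Q"
    using node_ge[of n] node_mono[of n] Q_integrable[OF a, of "node (Suc n)"] node_ge[of "Suc n"]
    by (intro Henstock_Kurzweil_Integration.integral_combine) auto
  then show ?case using Suc by (simp add: slice_def)
qed (simp add: node_0)

lemma energy_nodes_le:
  "n \<le> N \<Longrightarrow> energy (node n) \<le> energy a - (\<Sum>k<n. slice_quad k) / h + real n * step_const * width\<^sup>2"
proof (induction n)
  case (Suc n)
  have "energy (node (Suc n)) \<le> energy (node n) - slice_quad n / h + step_const * width\<^sup>2"
    using energy_step_le[OF M_bound node_nonneg node_mono node_le[OF Suc.prems] M_nonneg]
    unfolding slice_quad_def slice_def step_const_def by (simp add: node_Suc)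
  then show ?case using Suc by (simp add: algebra_simps diff_divide_distrib add_divide_distrib)
qed (simp add: node_0)

lemma energy_window_le: "energy (a + T) \<le> energy a - quad_total / h + T * step_const * width"
proof -
  have "real N * step_const * width\<^sup>2 = T * step_const * width"
    using N_width by (simp add: power2_eq_square mult_ac)
  then show ?thesis using energy_nodes_le[of N] unfolding quad_total_def node_N by linarith
qed

lemma dev_drift_le:
  "k \<le> N \<Longrightarrow> norm (dev (node k) i - dev a i)
    \<le> (\<Sum>l<k. norm (slice l *v Gamma_act (dev (node l)) i)) + real k * approx_const * width\<^sup>2"
proof (induction k)
  case (Suc k)
  have "norm (dev (node (Suc k)) i - dev (node k) i - slice k *v Gamma_act (dev (node k)) i) \<le> approx_const * width\<^sup>2"
    using dev_increment_approx[OF M_bound node_nonneg node_mono node_le[OF Suc.prems] M_nonneg, of i]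
    unfolding slice_def approx_const_def by (simp add: node_Suc)
  moreover have "norm (dev (node (Suc k)) i - dev a i) \<le> norm (dev (node k) i - dev a i)
      + norm (slice k *v Gamma_act (dev (node k)) i)
      + norm (dev (node (Suc k)) i - dev (node k) i - slice k *v Gamma_act (dev (node k)) i)"
    by (rule order_trans[OF _ add_mono[OF norm_triangle_ineq order_refl]],
        rule order_trans[OF _ norm_triangle_ineq]) (simp add: algebra_simps)
  ultimately show ?case using Suc by (simp add: algebra_simps)
qed (simp add: node_0)

lemma norm_slice_Gamma_act_squared_le:
  "(norm (slice l *v Gamma_act (dev (node l)) i))\<^sup>2 \<le> width * gamma_norm\<^sup>2 * slice_quad l"
proof -
  have "(norm (slice l *v Gamma_act (dev (node l)) i))\<^sup>2
      \<le> width * (Gamma_act (dev (node l)) i \<bullet> (slice l *v Gamma_act (dev (node l)) i))"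
    using width_pos by (intro psd_norm_squared_le[OF slice_symmetric slice_psd slice_quadratic_le]) simp
  also have "\<dots> \<le> width * (gamma_norm\<^sup>2 * slice_quad l)"
    unfolding slice_quad_def using width_pos
    by (intro mult_left_mono quadratic_Gamma_act_le[OF slice_symmetric slice_psd]) simp
  finally show ?thesis by (simp add: mult_ac)
qed

lemma dev_drift_squared_le:
  assumes "k \<le> N"
  shows "(norm (dev a i - dev (node k) i))\<^sup>2
    \<le> 2 * T * gamma_norm\<^sup>2 * quad_total + 2 * T\<^sup>2 * approx_const\<^sup>2 * width\<^sup>2"
proof -
  define U where "U = (\<Sum>l<k. norm (slice l *v Gamma_act (dev (node l)) i))"
  define E where "E = real k * approx_const * width\<^sup>2"
  have "norm (dev a i - dev (node k) i) \<le> U + E"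
    using dev_drift_le[OF assms, of i] unfolding U_def E_def by (simp add: norm_minus_commute)
  then have "(norm (dev a i - dev (node k) i))\<^sup>2 \<le> (U + E)\<^sup>2"
    by (rule power_mono) simp
  also have "\<dots> \<le> 2 * U\<^sup>2 + 2 * E\<^sup>2"
    using zero_le_power2[of "U - E"] by (simp add: power2_eq_square algebra_simps)
  also have "U\<^sup>2 \<le> T * gamma_norm\<^sup>2 * quad_total"
  proof -
    have "U\<^sup>2 \<le> (\<Sum>l<k. (norm (slice l *v Gamma_act (dev (node l)) i))\<^sup>2) * real k"
      unfolding U_def using sum_squared_le_sum_of_squares[of "\<lambda>l. norm (slice l *v Gamma_act (dev (node l)) i)" "{..<k}"]
      by simp
    also have "\<dots> \<le> (\<Sum>l<k. width * gamma_norm\<^sup>2 * slice_quad l) * real N"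
      using assms by (intro mult_mono sum_mono norm_slice_Gamma_act_squared_le) (auto intro!: sum_nonneg mult_nonneg_nonneg slice_quad_nonneg width_pos[THEN less_imp_le])
    also have "\<dots> \<le> (width * gamma_norm\<^sup>2 * quad_total) * real N"
      unfolding quad_total_def sum_distrib_left[symmetric] using assms width_pos
      by (intro mult_right_mono mult_left_mono sum_mono2) (auto simp: slice_quad_nonneg)
    finally have "U\<^sup>2 \<le> (real N * width) * (gamma_norm\<^sup>2 * quad_total)" by (simp add: mult_ac)
    then show ?thesis unfolding N_width by (simp add: mult_ac)
  qed
  also have "E\<^sup>2 \<le> (T * approx_const * width)\<^sup>2"
  proof (rule power_mono)
    have "E \<le> real N * approx_const * width\<^sup>2"
      unfolding E_def using assms width_pos approx_const_nonneg by (intro mult_right_mono) auto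
    also have "\<dots> = (real N * width) * approx_const * width" by (simp add: power2_eq_square mult_ac)
    finally show "E \<le> T * approx_const * width" unfolding N_width .
  qed (simp add: E_def approx_const_nonneg)
  finally show ?thesis by (simp add: power_mult_distrib mult_ac)
qed

lemma width_squared_le: "width\<^sup>2 \<le> T\<^sup>2 / real N"
proof -
  have "width\<^sup>2 = T\<^sup>2 / (real N)\<^sup>2" unfolding width_def by (simp add: power_divide)
  also have "\<dots> \<le> T\<^sup>2 / real N" using N by (intro divide_left_mono) (auto simp: power2_eq_square)
  finally show ?thesis .
qed

lemma excitation_le_quad_total:
  assumes exc: "\<And>v. \<epsilon> * (norm v)\<^sup>2 \<le> v \<bullet> (integral {a..a+T} Q *v v)"
  shows "\<epsilon> * stack_sqnorm (dev a)
    \<le> window_gain T * quad_total + 4 * real CARD('p) * T ^ 3 * approx_const\<^sup>2 * width\<^sup>2"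
proof -
  define B where "B = 2 * T * gamma_norm\<^sup>2 * quad_total + 2 * T\<^sup>2 * approx_const\<^sup>2 * width\<^sup>2"
  have "\<epsilon> * stack_sqnorm (dev a) = (\<Sum>i\<in>UNIV. \<epsilon> * (norm (dev a i))\<^sup>2)"
    unfolding stack_sqnorm_def by (simp add: sum_distrib_left)
  also have "\<dots> \<le> stack_quad (integral {a..a+T} Q) (dev a)"
    unfolding stack_quad_def by (rule sum_mono) (rule exc)
  also have "\<dots> = (\<Sum>k<N. stack_quad (slice k) (dev a))"
    using sum_slices[of N] stack_quad_sum[of slice "{..<N}" "dev a"] by (simp add: node_N)
  also have "\<dots> \<le> (\<Sum>k<N. 2 * slice_quad k + 2 * (width * (real CARD('p) * B)))"
  proof (rule sum_mono)
    fix k assume "k \<in> {..<N}"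
    then have "stack_sqnorm (\<lambda>i. dev a i - dev (node k) i) \<le> (\<Sum>i\<in>(UNIV::'p set). B)"
      unfolding stack_sqnorm_def B_def by (intro sum_mono dev_drift_squared_le) simp
    then have "stack_quad (slice k) (\<lambda>i. dev a i - dev (node k) i) \<le> width * (real CARD('p) * B)"
      using stack_quad_le_sqnorm[OF slice_quadratic_le, of k "\<lambda>i. dev a i - dev (node k) i"] width_pos
      by (simp add: order_trans mult_left_mono)
    then show "stack_quad (slice k) (dev a) \<le> 2 * slice_quad k + 2 * (width * (real CARD('p) * B))"
      using stack_quad_le_twice[OF slice_symmetric slice_psd, of k "dev a" "dev (node k)"]
      unfolding slice_quad_def by linarith
  qed
  also have "\<dots> = 2 * quad_total + (real N * width) * 2 * real CARD('p) * B"
    unfolding quad_total_def by (simp add: sum.distrib sum_distrib_left[symmetric] mult_ac)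
  also have "\<dots> = window_gain T * quad_total + 4 * real CARD('p) * T ^ 3 * approx_const\<^sup>2 * width\<^sup>2"
    unfolding B_def N_width window_gain_def by (simp add: algebra_simps power2_eq_square power3_eq_cube)
  finally show ?thesis .
qed

lemma energy_window_le_excitation:
  assumes "\<And>v. \<epsilon> * (norm v)\<^sup>2 \<le> v \<bullet> (integral {a..a+T} Q *v v)"
  shows "energy (a + T) \<le> energy a - \<epsilon> * stack_sqnorm (dev a) / (h * window_gain T)
    + (4 * real CARD('p) * T ^ 5 * approx_const\<^sup>2 / (h * window_gain T) + T\<^sup>2 * step_const) / real N"
proof -
  define K where "K = window_gain T"
  have K: "0 < K" unfolding K_def by (rule window_gain_pos)
  have "(\<epsilon> * stack_sqnorm (dev a) - 4 * real CARD('p) * T ^ 3 * approx_const\<^sup>2 * width\<^sup>2) / (h * K)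
      \<le> quad_total / h"
  proof -
    have "(\<epsilon> * stack_sqnorm (dev a) - 4 * real CARD('p) * T ^ 3 * approx_const\<^sup>2 * width\<^sup>2) / K \<le> quad_total"
      using excitation_le_quad_total[OF assms] K unfolding K_def[symmetric] by (simp add: field_simps)
    then have "(\<epsilon> * stack_sqnorm (dev a) - 4 * real CARD('p) * T ^ 3 * approx_const\<^sup>2 * width\<^sup>2) / K / h
        \<le> quad_total / h"
      using h_pos by (intro divide_right_mono) simp_all
    then show ?thesis by (simp add: divide_divide_eq_left mult.commute)
  qed
  moreover have "4 * real CARD('p) * T ^ 3 * approx_const\<^sup>2 * width\<^sup>2 / (h * K)
      \<le> 4 * real CARD('p) * T ^ 5 * approx_const\<^sup>2 / (h * K) / real N"
  proof -
    have "4 * real CARD('p) * T ^ 3 * approx_const\<^sup>2 * width\<^sup>2 \<le> 4 * real CARD('p) * T ^ 3 * approx_const\<^sup>2 * (T\<^sup>2 / real N)"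
      using T by (intro mult_left_mono[OF width_squared_le]) simp
    then show ?thesis using h_pos K by (simp add: divide_right_mono field_simps power_add[symmetric])
  qed
  moreover have "T * step_const * width = T\<^sup>2 * step_const / real N"
    unfolding width_def by (simp add: power2_eq_square)
  ultimately show ?thesis
    using energy_window_le unfolding K_def[symmetric] by (simp add: diff_divide_distrib add_divide_distrib)
qed

end

context consensus_dynamics
begin

lemma energy_window_decrease:
  assumes a: "0 \<le> a" and T: "0 < T"
    and exc: "\<And>v. \<epsilon> * (norm v)\<^sup>2 \<le> v \<bullet> (integral {a..a+T} Q *v v)"
  shows "energy (a + T) \<le> energy a - \<epsilon> * stack_sqnorm (dev a) / (h * window_gain T)"
proof -
  have "0 \<le> a + T" using a T by simp
  then obtain M where M: "0 \<le> M" "\<And>u. u \<in> {0..a+T} \<Longrightarrow> stack_norm1 (dev u) \<le> M"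
  proof (rule dev_bounded)
    fix M assume "0 \<le> M" "\<And>t. t \<in> {0..a + T} \<Longrightarrow> stack_norm1 (dev t) \<le> M"
    then show thesis by (rule that)
  qed
  define C where "C = 4 * real CARD('p) * T ^ 5 * (gamma_norm * real CARD('p) * gamma_norm * M)\<^sup>2 / (h * window_gain T)
    + T\<^sup>2 * (3 * lyap_const * (real CARD('p) * gamma_norm * M)\<^sup>2)"
  have "energy (a + T) \<le> energy a - \<epsilon> * stack_sqnorm (dev a) / (h * window_gain T) + C / real N"
    if "1 \<le> N" for N
  proof -
    interpret subdivided_window \<gamma> r Q x a T N M
      using a T that M by unfold_locales auto
    show ?thesis using energy_window_le_excitation[OF exc] unfolding C_def approx_const_def step_const_def .
  qed
  then show ?thesis by (rule le_if_le_add_div_nat)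
qed

lemma energy_antimono:
  assumes "0 \<le> a" "a \<le> t"
  shows "energy t \<le> energy a"
proof (cases "a = t")
  case False
  then have "0 < t - a" using assms by simp
  have "energy (a + (t - a)) \<le> energy a - 0 * stack_sqnorm (dev a) / (h * window_gain (t - a))"
    by (rule energy_window_decrease[OF assms(1) \<open>0 < t - a\<close>])
      (use window_psd[of a "a + (t - a)"] assms in \<open>simp add: psd_matrix_def\<close>)
  then show ?thesis by simp
qed simp

lemma norm_dev_squared_le_energy:
  assumes "0 \<le> t"
  shows "(norm (dev t i))\<^sup>2 \<le> energy t"
proof -
  have "(norm (dev t i))\<^sup>2 \<le> stack_inner (dev t) (dev t)"
    unfolding stack_inner_def power2_norm_eq_inner by (rule member_le_sum) auto
  also have "\<dots> \<le> energy t" by (rule stack_inner_le_lyap[OF r_mean_dev[OF assms]])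
  finally show ?thesis .
qed

lemma energy_nonneg: "0 \<le> t \<Longrightarrow> 0 \<le> energy t"
  using norm_dev_squared_le_energy[of t undefined] by (meson order_trans zero_le_power2)

lemma energy_le_sqnorm:
  assumes "0 \<le> t"
  shows "energy t \<le> (lyap_const * real CARD('p) + 1) * stack_sqnorm (dev t)"
proof -
  have "energy t \<le> lyap_const * (stack_norm1 (dev t))\<^sup>2"
    using abs_lyap_le[OF r_mean_dev[OF assms] r_mean_dev[OF assms]] by (simp add: power2_eq_square mult_ac)
  also have "\<dots> \<le> lyap_const * (real CARD('p) * stack_sqnorm (dev t))"
    by (rule mult_left_mono[OF stack_norm1_squared_le lyap_const_nonneg])
  also have "\<dots> \<le> (lyap_const * real CARD('p) + 1) * stack_sqnorm (dev t)"
    using stack_sqnorm_nonneg[of "dev t"] by (simp add: algebra_simps)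
  finally show ?thesis .
qed

lemma window_quadratic_ge_sigma_min:
  "0 \<le> a \<Longrightarrow> a \<le> b \<Longrightarrow> sigma_min (integral {a..b} Q) * (norm v)\<^sup>2 \<le> v \<bullet> (integral {a..b} Q *v v)"
  by (rule psd_quadratic_ge_sigma_min[OF window_symmetric window_psd])

lemma sigma_min_window_le_length:
  assumes "0 \<le> a" "a \<le> b"
  shows "sigma_min (integral {a..b} Q) \<le> b - a"
  using window_quadratic_ge_sigma_min[OF assms, of "axis undefined 1"]
    window_quadratic_le[OF assms, of "axis undefined 1"]
  by (simp add: norm_axis_1)

lemma window_gain_le: "window_gain T \<le> window_gain 1 * max 1 (T\<^sup>2)"
proof (cases "T\<^sup>2 \<le> 1")
  case True
  have "T\<^sup>2 * (4 * real CARD('p) * gamma_norm\<^sup>2) \<le> 1 * (4 * real CARD('p) * gamma_norm\<^sup>2)"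
    by (rule mult_right_mono[OF True]) simp
  then show ?thesis using True unfolding window_gain_def by (simp add: max_def mult_ac)
qed (simp add: window_gain_def max_def algebra_simps)

definition contraction_rate :: real where
  "contraction_rate = 2 / (h * (lyap_const * real CARD('p) + 1) * window_gain 1)"

lemma contraction_rate_pos: "0 < contraction_rate"
  unfolding contraction_rate_def using h_pos window_gain_pos lyap_const_nonneg
  by (simp add: add_nonneg_pos)

lemma contraction_rate_delta_le:
  assumes "0 < \<epsilon>" "\<epsilon> \<le> T"
  shows "contraction_rate * delta \<epsilon> T \<le> \<epsilon> / (h * window_gain T * (lyap_const * real CARD('p) + 1))"
proof -
  define C where "C = lyap_const * real CARD('p) + 1"
  have C: "0 < C" unfolding C_def using lyap_const_nonneg by (simp add: add_nonneg_pos)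
  have "contraction_rate * delta \<epsilon> T \<le> contraction_rate * (\<epsilon> / (2 * max 1 (T\<^sup>2)))"
    using delta_le[OF assms] contraction_rate_pos by (intro mult_left_mono) auto
  also have "\<dots> = \<epsilon> / (h * (window_gain 1 * max 1 (T\<^sup>2)) * C)"
    unfolding contraction_rate_def C_def by (simp add: field_simps)
  also have "\<dots> \<le> \<epsilon> / (h * window_gain T * C)"
    using window_gain_le[of T] window_gain_pos[of T] h_pos C assms(1)
    by (intro divide_left_mono mult_right_mono mult_left_mono) auto
  finally show ?thesis unfolding C_def .
qed

lemma energy_excitation_step:
  assumes a: "0 \<le> a" and T: "0 < T" and \<epsilon>: "0 < \<epsilon>" and exc: "\<epsilon> \<le> sigma_min (integral {a..a+T} Q)"
  shows "energy (a + T) \<le> (1 - contraction_rate * delta \<epsilon> T) * energy a"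
proof -
  define C where "C = lyap_const * real CARD('p) + 1"
  have C: "0 < C" unfolding C_def using lyap_const_nonneg by (simp add: add_nonneg_pos)
  have "\<epsilon> * (norm v)\<^sup>2 \<le> v \<bullet> (integral {a..a+T} Q *v v)" for v
    using mult_right_mono[OF exc zero_le_power2[of "norm v"]] window_quadratic_ge_sigma_min[of a "a + T" v] a T
    by linarith
  then have decrease: "energy (a + T) \<le> energy a - \<epsilon> * stack_sqnorm (dev a) / (h * window_gain T)"
    by (rule energy_window_decrease[OF a T])
  have "energy a / C \<le> stack_sqnorm (dev a)"
    using energy_le_sqnorm[OF a] C unfolding C_def by (simp add: field_simps)
  then have "\<epsilon> * (energy a / C) / (h * window_gain T) \<le> \<epsilon> * stack_sqnorm (dev a) / (h * window_gain T)"
    using \<epsilon> h_pos window_gain_pos[of T] by (intro divide_right_mono mult_left_mono) auto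
  moreover have "\<epsilon> \<le> T" using exc sigma_min_window_le_length[of a "a + T"] a T by simp
  then have "contraction_rate * delta \<epsilon> T * energy a \<le> \<epsilon> / (h * window_gain T * C) * energy a"
    using contraction_rate_delta_le[OF \<epsilon>] energy_nonneg[OF a] unfolding C_def
    by (intro mult_right_mono) auto
  ultimately show ?thesis using decrease by (simp add: algebra_simps)
qed

lemma energy_tendsto_zero:
  assumes "sufficiently_exciting Q"
  shows "(energy \<longlongrightarrow> 0) at_top"
proof -
  obtain \<epsilon> T :: "nat \<Rightarrow> real" where pos: "\<And>k. 0 < \<epsilon> k \<and> 0 < T k"
    and exc: "\<And>k. \<epsilon> k \<le> sigma_min (integral {(\<Sum>j<k. T j) .. (\<Sum>j<k. T j) + T k} Q)"
    and ns: "\<not> summable (\<lambda>k. delta (\<epsilon> k) (T k))"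
    using assms unfolding sufficiently_exciting_def by blast
  define t where "t k = (\<Sum>j<k. T j)" for k
  have t: "0 \<le> t k" for k unfolding t_def using pos by (simp add: sum_nonneg less_imp_le)
  define d where "d k = min (contraction_rate * delta (\<epsilon> k) (T k)) 1" for k
  have delta: "0 \<le> delta (\<epsilon> k) (T k)" for k unfolding delta_def using pos[of k] by simp
  have step: "energy (t (Suc k)) \<le> (1 - d k) * energy (t k)" for k
  proof -
    have "energy (t (Suc k)) \<le> (1 - contraction_rate * delta (\<epsilon> k) (T k)) * energy (t k)"
      using energy_excitation_step[OF t[of k], of "T k" "\<epsilon> k"] pos[of k] exc[of k] unfolding t_def by simp
    also have "\<dots> \<le> (1 - d k) * energy (t k)"
      unfolding d_def using energy_nonneg[OF t] by (intro mult_right_mono) auto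
    finally show ?thesis .
  qed
  have small: "\<exists>n. energy (t n) < e" if "0 < e" for e
  proof (rule nonsummable_contraction_eventually_less[where v="\<lambda>k. energy (t k)" and d=d, OF _ _ step _ that])
    show "0 \<le> energy (t k)" for k by (rule energy_nonneg[OF t])
    show "0 \<le> d k" for k unfolding d_def using contraction_rate_pos delta by simp
    show "\<not> summable d" unfolding d_def by (rule not_summable_min_mult[OF delta ns contraction_rate_pos])
  qed
  show ?thesis
  proof (rule tendstoI)
    fix e :: real assume "0 < e"
    then obtain n where n: "energy (t n) < e" using small by blast
    have "dist (energy s) 0 < e" if "t n \<le> s" for s
      using energy_antimono[OF t that] energy_nonneg[OF order_trans[OF t that]] n by simp
    then show "eventually (\<lambda>s. dist (energy s) 0 < e) at_top"
      unfolding eventually_at_top_linorder by blast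
  qed
qed

lemma dev_tendsto_zero:
  assumes "sufficiently_exciting Q"
  shows "((\<lambda>t. norm (x i t - xbar)) \<longlongrightarrow> 0) at_top"
proof (rule Lim_null_comparison)
  show "eventually (\<lambda>t. norm (norm (x i t - xbar)) \<le> sqrt (energy t)) at_top"
    using norm_dev_squared_le_energy unfolding eventually_at_top_linorder dev_def
    by (intro exI[of _ 0]) (auto intro: real_le_rsqrt)
  show "((\<lambda>t. sqrt (energy t)) \<longlongrightarrow> 0) at_top"
    using tendsto_real_sqrt[OF energy_tendsto_zero[OF assms]] by simp
qed

end

theorem theorem4:
  fixes Q :: "real \<Rightarrow> real^'n^'n"
    and \<gamma> :: "'p::finite \<Rightarrow> 'p \<Rightarrow> real"
    and x :: "'p \<Rightarrow> real \<Rightarrow> real^'n"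
    and r :: "'p \<Rightarrow> real"
  assumes Qbar: "\<And>t. 0 \<le> t \<Longrightarrow> Q t \<in> Qbar"
    and Qriem: "\<And>a b. 0 \<le> a \<Longrightarrow> a \<le> b \<Longrightarrow> riemann_integrable_on Q a b"
    and Qexc: "sufficiently_exciting Q"
    and \<Gamma>: "interconnection \<gamma>"
    and conn: "connected_graph \<gamma>"
    and sol: "\<And>i t. 0 \<le> t \<Longrightarrow>
       ((\<lambda>s. Q s *v (\<Sum>j\<in>UNIV - {i}. \<gamma> i j *\<^sub>R (x j s - x i s))) has_integral (x i t - x i 0)) {0..t}"
    and r_left: "\<And>j. (\<Sum>i\<in>UNIV. r i * \<gamma> i j) = 0"
    and r_sum: "(\<Sum>i\<in>UNIV. r i) = 1"
  shows "\<forall>i. ((\<lambda>t. norm (x i t - (\<Sum>j\<in>UNIV. r j *\<^sub>R x j 0))) \<longlongrightarrow> 0) at_top"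
proof -
  interpret consensus_dynamics \<gamma> r Q x
    using assms by unfold_locales auto
  show ?thesis using dev_tendsto_zero[OF Qexc] unfolding xbar_def by blast
qed

end
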